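(* The conclusion of the erosion leader-election theorem holds also in 2D geometric space: if $S$ is a finite nonempty set of $n$ nodes of the triangular lattice $G_\Delta$ that is connected and contractible, then under an unfair sequential adversary, in every execution of the erosion leader-election system on $S$, at no time do two distinct amoebots have $\mathtt{leader}=\mathrm{true}$, once set $\mathtt{leader}=\mathrm{true}$ is never unset, and within $O(n)$ rounds exactly one amoebot has $\mathtt{leader}=\mathrm{true}$.
   Context: $G_\Delta$ is the triangular lattice, viewed as one of the planar triangular sublattices of $G_{\mathrm{FCC}}$ (the graph on $\{(x,y,z)\in\mathbb{Z}^3: x+y+z\text{ even}\}$ with adjacency iff Euclidean distance $\sqrt2$), e.g. the nodes of $G_{\mathrm{FCC}}$ in a plane $x+y+z=0$; each node has 6 neighbors. A finite node set $S$ of $G_\Delta$ is connected if its induced subgraph is connected and contractible if the union of the closed hexagons of the hexagonal tiling dual to $G_\Delta$ corresponding to nodes of $S$ is contractible. Each node $A\in S$ hosts an amoebot with neighbors $N(A)$ = nodes of $S$ adjacent to $A$, and variables $\mathtt{candidate}\in\{\mathrm{null},\mathrm{true},\mathrm{false}\}$ (initially null), $\mathtt{leader}$ (initially false). Let $K(A)=\{B\in N(A):B.\mathtt{candidate}=\mathrm{true}\}$; CanErode$(A)$ holds iff $|K(A)|=1$, or $2\le|K(A)|\le5$ and $K(A)$ induces a connected subgraph, or $K(A)=\{B,D\}$ and some candidate $C\ne A$ adjacent to $B,D$ makes $A,B,C,D$ a chordless 4-cycle (this last case never occurs in $G_\Delta$). Actions: Setup (enabled iff $\mathtt{candidate}=\mathrm{null}$;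 sets it to true); Erode (enabled iff $A.\mathtt{candidate}=\mathrm{true}$, all neighbors have $\mathtt{candidate}\ne\mathrm{null}$, and CanErode$(A)$; sets $A.\mathtt{candidate}=\mathrm{false}$); DeclareLeader (enabled iff $A.\mathtt{candidate}=\mathrm{true}$ and all neighbors have $\mathtt{candidate}=\mathrm{false}$; sets $A.\mathtt{leader}=\mathrm{true}$). Unfair sequential adversary: at each step an arbitrary enabled amoebot atomically executes one of its enabled actions. Rounds: round $i$ starts at $t_i$ ($t_0=0$) and ends at the earliest $t_{i+1}>t_i$ by which every amoebot enabled at $t_i$ has executed an action or become disabled at some time in $(t_i,t_{i+1}]$. *)

theory Defs
  imports "HOL-Analysis.Analysis"
begin

type_synonym node = "int \<times> int \<times> int"

definition fcc_node :: "node \<Rightarrow> bool" where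
  "fcc_node p \<longleftrightarrow> (case p of (x, y, z) \<Rightarrow> even (x + y + z))"

definition tri_node :: "node \<Rightarrow> bool" where
  "tri_node p \<longleftrightarrow> fcc_node p \<and> (case p of (x, y, z) \<Rightarrow> x + y + z = 0)"

definition adj :: "node \<Rightarrow> node \<Rightarrow> bool" where
  "adj p q \<longleftrightarrow> tri_node p \<and> tri_node q \<and>
     (case p of (x1, y1, z1) \<Rightarrow> case q of (x2, y2, z2) \<Rightarrow>
        (x1 - x2)^2 + (y1 - y2)^2 + (z1 - z2)^2 = 2)"

definition induced_connected :: "node set \<Rightarrow> bool" where
  "induced_connected T \<longleftrightarrow>
     (\<forall>u\<in>T. \<forall>v\<in>T. (u, v) \<in> {(a, b). a \<in> T \<and> b \<in> T \<and> adj a b}\<^sup>*)"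

definition embed :: "node \<Rightarrow> real \<times> real \<times> real" where
  "embed p = (case p of (x, y, z) \<Rightarrow> (real_of_int x, real_of_int y, real_of_int z))"

text \<open>The closed hexagon of node p: its (closed) Voronoi cell within the plane x+y+z=0.\<close>
definition hexagon :: "node \<Rightarrow> (real \<times> real \<times> real) set" where
  "hexagon p = {v. (case v of (a, b, c) \<Rightarrow> a + b + c = 0) \<and>
                   (\<forall>q. tri_node q \<longrightarrow> dist v (embed p) \<le> dist v (embed q))}"

definition lattice_contractible :: "node set \<Rightarrow> bool" where
  "lattice_contractible S \<longleftrightarrow> contractible (\<Union>p\<in>S. hexagon p)"

record conf =
  cand :: "node \<Rightarrow> bool option"   \<comment> \<open>None = null\<close>
  ldr  :: "node \<Rightarrow> bool"

definition nbrs :: "node set \<Rightarrow> node \<Rightarrow> node set" where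
  "nbrs S A = {B \<in> S. adj A B}"

definition Kset :: "node set \<Rightarrow> conf \<Rightarrow> node \<Rightarrow> node set" where
  "Kset S c A = {B \<in> nbrs S A. cand c B = Some True}"

definition can_erode :: "node set \<Rightarrow> conf \<Rightarrow> node \<Rightarrow> bool" where
  "can_erode S c A \<longleftrightarrow>
     card (Kset S c A) = 1 \<or>
     (2 \<le> card (Kset S c A) \<and> card (Kset S c A) \<le> 5 \<and> induced_connected (Kset S c A)) \<or>
     (\<exists>B D. B \<noteq> D \<and> Kset S c A = {B, D} \<and>
        (\<exists>C\<in>S. C \<noteq> A \<and> cand c C = Some True \<and> adj B C \<and> adj C D \<and>
               adj A B \<and> adj D A \<and> \<not> adj A C \<and> \<not> adj B D))"

datatype action = Setup | Erode | DeclareLeader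

fun enabled_act :: "node set \<Rightarrow> conf \<Rightarrow> node \<Rightarrow> action \<Rightarrow> bool" where
  "enabled_act S c A Setup \<longleftrightarrow> cand c A = None"
| "enabled_act S c A Erode \<longleftrightarrow> cand c A = Some True \<and>
     (\<forall>B\<in>nbrs S A. cand c B \<noteq> None) \<and> can_erode S c A"
| "enabled_act S c A DeclareLeader \<longleftrightarrow> cand c A = Some True \<and>
     (\<forall>B\<in>nbrs S A. cand c B = Some False)"

fun apply_act :: "conf \<Rightarrow> node \<Rightarrow> action \<Rightarrow> conf" where
  "apply_act c A Setup = c\<lparr>cand := (cand c)(A := Some True)\<rparr>"
| "apply_act c A Erode = c\<lparr>cand := (cand c)(A := Some False)\<rparr>"
| "apply_act c A DeclareLeader = c\<lparr>ldr := (ldr c)(A := True)\<rparr>"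

definition enabled :: "node set \<Rightarrow> conf \<Rightarrow> node \<Rightarrow> bool" where
  "enabled S c A \<longleftrightarrow> A \<in> S \<and> (\<exists>a. enabled_act S c A a)"

text \<open>An execution under the unfair sequential adversary: configuration c t at time t,
  acts t = the (amoebot, action) executed in the step from time t to time t+1.
  If no amoebot is enabled, the system is terminated and stays unchanged (None).\<close>
definition execution :: "node set \<Rightarrow> (nat \<Rightarrow> conf) \<Rightarrow> (nat \<Rightarrow> (node \<times> action) option) \<Rightarrow> bool" where
  "execution S c acts \<longleftrightarrow>
     (\<forall>A\<in>S. cand (c 0) A = None \<and> \<not> ldr (c 0) A) \<and>
     (\<forall>t. case acts t of
            Some (A, a) \<Rightarrow> A \<in> S \<and> enabled_act S (c t) A a \<and> c (Suc t) = apply_act (c t) A a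
          | None \<Rightarrow> (\<forall>A\<in>S. \<not> enabled S (c t) A) \<and> c (Suc t) = c t)"

definition round_done :: "node set \<Rightarrow> (nat \<Rightarrow> conf) \<Rightarrow> (nat \<Rightarrow> (node \<times> action) option) \<Rightarrow> nat \<Rightarrow> nat \<Rightarrow> bool" where
  "round_done S c acts t0 t \<longleftrightarrow> t0 < t \<and>
     (\<forall>A. enabled S (c t0) A \<longrightarrow>
        (\<exists>s. t0 < s \<and> s \<le> t \<and> ((\<exists>a. acts (s - 1) = Some (A, a)) \<or> \<not> enabled S (c s) A)))"

inductive round_start :: "node set \<Rightarrow> (nat \<Rightarrow> conf) \<Rightarrow> (nat \<Rightarrow> (node \<times> action) option) \<Rightarrow> nat \<Rightarrow> nat \<Rightarrow> bool"
  for S c acts where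
  "round_start S c acts 0 0"
| "round_start S c acts i t \<Longrightarrow> \<exists>t'. round_done S c acts t t' \<Longrightarrow>
     round_start S c acts (Suc i) (LEAST t'. round_done S c acts t t')"

end

theory Submission
  imports Defs
begin

text \<open>The candidates (amoebots whose flag is not false) always form a connected set whose clique
  complex has positive Euler characteristic \<chi>.  Removing a node A changes 6\<chi> by 6 - 6r, where r
  is the number of maximal runs of candidates among the six neighbours of A; CanErode guarantees
  r \<ge> 1, so erosion preserves the invariant.  While two or more candidates remain, the identity
  6\<chi> = \<Sum> (6 - deg A - 2 r(A)) > 0 yields a candidate with a single run of at most three
  candidate neighbours, which may erode; a lone candidate declares itself leader.  Initially
  \<chi>(S) \<ge> 1: contractibility makes the complement of S connected, so S arises from a large rhombus
  by repeatedly removing a node with a neighbour outside, which never increases the number of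
  holes.  The potential #null + #candidates + [no leader] starts at 2n + 1 and drops in every
  round until it reaches 1.\<close>

definition unit_dir :: "nat \<Rightarrow> int \<times> int \<times> int" where
  "unit_dir i = (if i mod 6 = 0 then (1,-1,0) else if i mod 6 = 1 then (1,0,-1)
    else if i mod 6 = 2 then (0,1,-1) else if i mod 6 = 3 then (-1,1,0)
    else if i mod 6 = 4 then (-1,0,1) else (0,-1,1))"

definition nbr :: "node \<Rightarrow> nat \<Rightarrow> node" where
  "nbr A i = (case A of (x,y,z) \<Rightarrow> case unit_dir i of (a,b,c) \<Rightarrow> (x+a,y+b,z+c))"

lemma lessThan_6: "{..<6::nat} = {0,1,2,3,4,5}" by auto

lemma unit_dir_image: "unit_dir ` {..<6} = {(1,-1,0),(1,0,-1),(0,1,-1),(-1,1,0),(-1,0,1),(0,-1,1)}"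
  by (auto simp: lessThan_6 unit_dir_def)

lemma square_le_2_int: "(a::int)^2 \<le> 2 \<Longrightarrow> a \<in> {-1,0,1}"
proof -
  assume "a^2 \<le> 2"
  have "\<bar>a\<bar> \<le> 1"
  proof (rule ccontr)
    assume "\<not> \<bar>a\<bar> \<le> 1"
    hence "2 \<le> \<bar>a\<bar>" by simp
    hence "2^2 \<le> \<bar>a\<bar>^2" by (rule power_mono) simp
    with \<open>a^2 \<le> 2\<close> show False by simp
  qed
  thus ?thesis by auto
qed

lemma unit_vector_is_unit_dir:
  fixes a b c :: int
  assumes "a+b+c = 0" "a^2+b^2+c^2 = 2"
  shows "\<exists>i<6. (a,b,c) = unit_dir i"
proof -
  have "a^2 \<le> 2" "b^2 \<le> 2" using assms(2) zero_le_power2[of a] zero_le_power2[of b] zero_le_power2[of c] by linarith+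
  hence "a \<in> {-1,0,1}" "b \<in> {-1,0,1}" using square_le_2_int by auto
  hence "c = -a-b" using assms by simp
  with \<open>a \<in> _\<close> \<open>b \<in> _\<close> assms(2) have "(a,b,c) \<in> unit_dir ` {..<6}"
    unfolding unit_dir_image by (elim insertE emptyE; simp)
  thus ?thesis by force
qed

lemma tri_node_iff: "tri_node (x,y,z) \<longleftrightarrow> x+y+z = 0"
  unfolding tri_node_def fcc_node_def by (simp only: prod.case) (metis even_zero)

definition tri_set :: "node set \<Rightarrow> bool" where
  "tri_set X \<longleftrightarrow> (\<forall>a\<in>X. tri_node a)"

lemma unit_dir_simps: "unit_dir 0 = (1,-1,0)" "unit_dir 1 = (1,0,-1)" "unit_dir 2 = (0,1,-1)"
  "unit_dir 3 = (-1,1,0)" "unit_dir 4 = (-1,0,1)" "unit_dir 5 = (0,-1,1)"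
  by (simp_all add: unit_dir_def)

lemma unit_dir_Suc_0: "unit_dir (Suc 0) = (1,0,-1)" by (simp add: unit_dir_def)

lemma unit_dir_sq: "(case unit_dir i of (a,b,c) \<Rightarrow> a^2+b^2+c^2) = 2"
  by (simp add: unit_dir_def)

lemma adj_iff_unit_dir: "adj (x1,y1,z1) (x2,y2,z2) \<longleftrightarrow> x1+y1+z1 = 0 \<and> x2+y2+z2 = 0 \<and>
   (\<exists>i<6. (x2-x1,y2-y1,z2-z1) = unit_dir i)"
proof -
  have e: "(x1 - x2)^2 + (y1 - y2)^2 + (z1 - z2)^2 = (x2 - x1)^2 + (y2 - y1)^2 + (z2 - z1)^2"
    by (simp add: power2_commute[of x1 x2] power2_commute[of y1 y2] power2_commute[of z1 z2])
  have d: "adj (x1,y1,z1) (x2,y2,z2) \<longleftrightarrow> x1+y1+z1 = 0 \<and> x2+y2+z2 = 0 \<and>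
     (x2 - x1)^2 + (y2 - y1)^2 + (z2 - z1)^2 = 2"
    by (simp only: adj_def tri_node_iff prod.case e)
  show ?thesis
  proof
    assume "adj (x1,y1,z1) (x2,y2,z2)"
    hence h: "x1+y1+z1 = 0" "x2+y2+z2 = 0" "(x2 - x1)^2 + (y2 - y1)^2 + (z2 - z1)^2 = 2"
      using d by auto
    have "(x2-x1)+(y2-y1)+(z2-z1) = 0" using h by simp
    with h show "x1+y1+z1 = 0 \<and> x2+y2+z2 = 0 \<and> (\<exists>i<6. (x2-x1,y2-y1,z2-z1) = unit_dir i)"
      using unit_vector_is_unit_dir by blast
  next
    assume h: "x1+y1+z1 = 0 \<and> x2+y2+z2 = 0 \<and> (\<exists>i<6. (x2-x1,y2-y1,z2-z1) = unit_dir i)"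
    then obtain i where i: "(x2-x1,y2-y1,z2-z1) = unit_dir i" by blast
    have "(case (x2-x1,y2-y1,z2-z1) of (a,b,c) \<Rightarrow> a^2+b^2+c^2) = 2" unfolding i by (rule unit_dir_sq)
    hence "(x2 - x1)^2 + (y2 - y1)^2 + (z2 - z1)^2 = 2" by simp
    with h d show "adj (x1,y1,z1) (x2,y2,z2)" by blast
  qed
qed

lemma adj_sym: "adj A B \<Longrightarrow> adj B A"
proof -
  obtain x1 y1 z1 where A: "A = (x1,y1,z1)" by (cases A)
  obtain x2 y2 z2 where B: "B = (x2,y2,z2)" by (cases B)
  show "adj A B \<Longrightarrow> adj B A" unfolding A B adj_def
    by (simp add: power2_commute[of x1 x2] power2_commute[of y1 y2] power2_commute[of z1 z2])
qed

lemma adj_irrefl: "\<not> adj A A"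
  unfolding adj_def by (auto split: prod.splits)

lemma nbr_coord: "nbr (x,y,z) i = (x + fst (unit_dir i), y + fst (snd (unit_dir i)), z + snd (snd (unit_dir i)))"
  by (simp add: nbr_def split: prod.splits)

lemma unit_dir_sum: "fst (unit_dir i) + fst (snd (unit_dir i)) + snd (snd (unit_dir i)) = 0"
  by (simp add: unit_dir_def)

lemma tri_node_nbr: "tri_node A \<Longrightarrow> tri_node (nbr A i)"
proof -
  assume "tri_node A"
  moreover obtain x y z where A: "A = (x,y,z)" by (cases A)
  ultimately have "x+y+z = 0" by (simp add: tri_node_iff)
  thus ?thesis unfolding A nbr_coord tri_node_iff using unit_dir_sum[of i] by linarith
qed

lemma adj_iff_nbr: "tri_node A \<Longrightarrow> adj A B \<longleftrightarrow> (\<exists>i<6. B = nbr A i)"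
proof -
  assume t: "tri_node A"
  obtain x1 y1 z1 where A: "A = (x1,y1,z1)" by (cases A)
  obtain x2 y2 z2 where B: "B = (x2,y2,z2)" by (cases B)
  have s: "x1+y1+z1 = 0" using t A tri_node_iff by simp
  show ?thesis
  proof
    assume "adj A B"
    then obtain i where "i<6" "(x2-x1,y2-y1,z2-z1) = unit_dir i" unfolding A B adj_iff_unit_dir by blast
    hence "B = nbr A i" unfolding A B nbr_coord by (metis add_diff_cancel_left' diff_add_cancel fst_conv snd_conv)
    thus "\<exists>i<6. B = nbr A i" using \<open>i<6\<close> by blast
  next
    assume "\<exists>i<6. B = nbr A i"
    then obtain i where i: "i<6" "B = nbr A i" by blast
    hence d: "(x2-x1,y2-y1,z2-z1) = unit_dir i" unfolding A B nbr_coord by auto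
    have "tri_node B" using tri_node_nbr[OF t] i(2) by simp
    hence "x2+y2+z2 = 0" using B tri_node_iff by simp
    thus "adj A B" unfolding A B adj_iff_unit_dir using s d i by blast
  qed
qed

lemma less_6_cases: "i < (6::nat) \<Longrightarrow> (i = 0 \<Longrightarrow> P) \<Longrightarrow> (i = 1 \<Longrightarrow> P) \<Longrightarrow> (i = 2 \<Longrightarrow> P)
  \<Longrightarrow> (i = 3 \<Longrightarrow> P) \<Longrightarrow> (i = 4 \<Longrightarrow> P) \<Longrightarrow> (i = 5 \<Longrightarrow> P) \<Longrightarrow> P"
  by linarith

lemma ex_less_6: "(\<exists>k<(6::nat). P k) \<longleftrightarrow> P 0 \<or> P 1 \<or> P 2 \<or> P 3 \<or> P 4 \<or> P 5"
proof -
  have "(\<exists>k<(6::nat). P k) = (\<exists>k\<in>{..<6}. P k)" by auto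
  also have "\<dots> = (P 0 \<or> P 1 \<or> P 2 \<or> P 3 \<or> P 4 \<or> P 5)" by (simp add: lessThan_6)
  finally show ?thesis .
qed

lemma nbr_inj: "i < 6 \<Longrightarrow> j < 6 \<Longrightarrow> nbr A i = nbr A j \<Longrightarrow> i = j"
proof -
  assume "i<6" "j<6" and h: "nbr A i = nbr A j"
  obtain x y z where A: "A = (x,y,z)" by (cases A)
  have "unit_dir i = unit_dir j" using h unfolding A nbr_coord by (simp add: prod_eq_iff)
  thus "i = j" using \<open>i<6\<close> \<open>j<6\<close> unfolding unit_dir_def by (simp split: if_splits)
qed

lemma adj_nbr_nbr: "tri_node A \<Longrightarrow> i < 6 \<Longrightarrow> j < 6 \<Longrightarrow>
   adj (nbr A i) (nbr A j) \<longleftrightarrow> (j = Suc i mod 6 \<or> i = Suc j mod 6)"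
proof -
  assume t: "tri_node A" and ij: "i < 6" "j < 6"
  obtain x y z where A: "A = (x,y,z)" by (cases A)
  have s: "x+y+z = 0" using t A tri_node_iff by simp
  have "adj (nbr A i) (nbr A j) \<longleftrightarrow> (\<exists>k<6. (fst (unit_dir j) - fst (unit_dir i), fst (snd (unit_dir j)) - fst (snd (unit_dir i)),
      snd (snd (unit_dir j)) - snd (snd (unit_dir i))) = unit_dir k)"
    unfolding A nbr_coord adj_iff_unit_dir using s unit_dir_sum[of i] unit_dir_sum[of j] by auto
  also have "\<dots> \<longleftrightarrow> (j = Suc i mod 6 \<or> i = Suc j mod 6)"
    unfolding ex_less_6
    by (rule less_6_cases[OF ij(1)]; rule less_6_cases[OF ij(2)]; simp add: unit_dir_simps unit_dir_Suc_0)
  finally show ?thesis .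
qed

section \<open>A discrete Euler characteristic\<close>

text \<open>Edges and triangles of the clique complex of X are counted as ordered pairs and triples, so
  euler6 X = 6 (V - E + F).  The neighbours of a node A are indexed by the six directions in
  counterclockwise order; run_ends marks the last direction of each maximal run of occupied
  neighbours, and wedge_dirs the occupied triangles at A.\<close>

definition edges :: "node set \<Rightarrow> (node \<times> node) set" where
  "edges X = {(a,b). a \<in> X \<and> b \<in> X \<and> adj a b}"

definition triangles :: "node set \<Rightarrow> (node \<times> node \<times> node) set" where
  "triangles X = {(a,b,c). a \<in> X \<and> b \<in> X \<and> c \<in> X \<and> adj a b \<and> adj b c \<and> adj a c}"

definition wedges_at :: "node set \<Rightarrow> node \<Rightarrow> (node \<times> node) set" where
  "wedges_at X a = {(b,c). b \<in> X \<and> c \<in> X \<and> adj a b \<and> adj b c \<and> adj a c}"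

definition euler6 :: "node set \<Rightarrow> int" where
  "euler6 X = 6 * int (card X) - 3 * int (card (edges X)) + int (card (triangles X))"

definition occ_dirs :: "node set \<Rightarrow> node \<Rightarrow> nat set" where
  "occ_dirs X A = {i. i < 6 \<and> nbr A i \<in> X}"

definition run_ends :: "node set \<Rightarrow> node \<Rightarrow> nat set" where
  "run_ends X A = {i. i < 6 \<and> nbr A i \<in> X \<and> nbr A (Suc i mod 6) \<notin> X}"

definition wedge_dirs :: "node set \<Rightarrow> node \<Rightarrow> nat set" where
  "wedge_dirs X A = {i. i < 6 \<and> nbr A i \<in> X \<and> nbr A (Suc i mod 6) \<in> X}"

abbreviation occ :: "node set \<Rightarrow> node \<Rightarrow> nat" where
  "occ X A \<equiv> card (occ_dirs X A)"

abbreviation runs :: "node set \<Rightarrow> node \<Rightarrow> nat" where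
  "runs X A \<equiv> card (run_ends X A)"

abbreviation nwedges :: "node set \<Rightarrow> node \<Rightarrow> nat" where
  "nwedges X A \<equiv> card (wedge_dirs X A)"

lemma finite_occ_dirs: "finite (occ_dirs X A)"
  by (rule finite_subset[of _ "{..<6}"]) (unfold occ_dirs_def, blast, simp)

lemma finite_run_ends: "finite (run_ends X A)"
  by (rule finite_subset[of _ "{..<6}"]) (unfold run_ends_def, blast, simp)

lemma finite_wedge_dirs: "finite (wedge_dirs X A)"
  by (rule finite_subset[of _ "{..<6}"]) (unfold wedge_dirs_def, blast, simp)

lemma occ_eq_runs_plus_wedges: "occ X A = runs X A + nwedges X A"
proof -
  have "occ_dirs X A = run_ends X A \<union> wedge_dirs X A" "run_ends X A \<inter> wedge_dirs X A = {}" unfolding occ_dirs_def run_ends_def wedge_dirs_def by blast+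
  thus ?thesis using finite_run_ends finite_wedge_dirs card_Un_disjoint by metis
qed

lemma occ_le_6: "occ X A \<le> 6"
proof -
  have "occ_dirs X A \<subseteq> {..<6}" unfolding occ_dirs_def by blast
  thus ?thesis using card_mono[of "{..<6::nat}"] by fastforce
qed

lemma runs_le_occ: "runs X A \<le> occ X A" using occ_eq_runs_plus_wedges by simp

lemma nbr_neq: "tri_node A \<Longrightarrow> i < 6 \<Longrightarrow> nbr A i \<noteq> A"
proof
  assume "tri_node A" "i < 6" "nbr A i = A"
  hence "adj A A" using adj_iff_nbr[of A A] by metis
  thus False using adj_irrefl by simp
qed

lemma occ_dirs_Diff_self: "tri_node A \<Longrightarrow> occ_dirs (X - {A}) A = occ_dirs X A"
  using nbr_neq[of A] unfolding occ_dirs_def by blast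

lemma card_nbrs: assumes "tri_node A" shows "card (nbrs X A) = occ X A"
proof -
  have "nbrs X A = nbr A ` occ_dirs X A" unfolding nbrs_def occ_dirs_def adj_iff_nbr[OF assms] by blast
  moreover have "inj_on (nbr A) (occ_dirs X A)" by (auto simp: inj_on_def occ_dirs_def intro: nbr_inj)
  ultimately show ?thesis by (simp add: card_image)
qed

lemma Suc_mod_6_less: "i < 6 \<Longrightarrow> Suc i mod 6 < (6::nat)" by simp

lemma wedges_at_eq:
  assumes "tri_node A"
  shows "wedges_at X A = (\<lambda>i. (nbr A i, nbr A (Suc i mod 6))) ` wedge_dirs X A \<union>
    (\<lambda>i. (nbr A (Suc i mod 6), nbr A i)) ` wedge_dirs X A" (is "_ = ?f ` _ \<union> ?g ` _")
proof -
  have adjs: "\<And>i. i < 6 \<Longrightarrow> adj (nbr A i) (nbr A (Suc i mod 6))" 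
    using adj_nbr_nbr[OF assms] by simp
  have "wedges_at X A \<subseteq> ?f ` wedge_dirs X A \<union> ?g ` wedge_dirs X A"
  proof
    fix p assume "p \<in> wedges_at X A"
    then obtain b c where p: "p = (b,c)" "b \<in> X" "c \<in> X" "adj A b" "adj b c" "adj A c"
      unfolding wedges_at_def by blast
    then obtain i j where ij: "i < 6" "j < 6" "b = nbr A i" "c = nbr A j"
      using adj_iff_nbr[OF assms] by metis
    hence "j = Suc i mod 6 \<or> i = Suc j mod 6" using adj_nbr_nbr[OF assms] p by simp
    thus "p \<in> ?f ` wedge_dirs X A \<union> ?g ` wedge_dirs X A"
    proof
      assume "j = Suc i mod 6"
      hence "i \<in> wedge_dirs X A" "p = ?f i" using ij p unfolding wedge_dirs_def by blast+
      thus ?thesis by blast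
    next
      assume "i = Suc j mod 6"
      hence "j \<in> wedge_dirs X A" "p = ?g j" using ij p unfolding wedge_dirs_def by blast+
      thus ?thesis by blast
    qed
  qed
  moreover have "?f ` wedge_dirs X A \<union> ?g ` wedge_dirs X A \<subseteq> wedges_at X A"
  proof
    fix p assume "p \<in> ?f ` wedge_dirs X A \<union> ?g ` wedge_dirs X A"
    then obtain i where i: "i \<in> wedge_dirs X A" "p = ?f i \<or> p = ?g i" by blast
    hence i6: "i < 6" "nbr A i \<in> X" "nbr A (Suc i mod 6) \<in> X" unfolding wedge_dirs_def by blast+
    have a1: "adj A (nbr A i)" "adj A (nbr A (Suc i mod 6))"
      using adj_iff_nbr[OF assms] i6(1) Suc_mod_6_less by blast+
    have a2: "adj (nbr A i) (nbr A (Suc i mod 6))" "adj (nbr A (Suc i mod 6)) (nbr A i)"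
      using adjs[OF i6(1)] adj_sym by blast+
    show "p \<in> wedges_at X A" using i(2) i6 a1 a2 unfolding wedges_at_def by blast
  qed
  ultimately show ?thesis by blast
qed

lemma card_wedges_at:
  assumes "tri_node A"
  shows "card (wedges_at X A) = 2 * nwedges X A"
proof -
  let ?f = "\<lambda>i. (nbr A i, nbr A (Suc i mod 6))"
  let ?g = "\<lambda>i. (nbr A (Suc i mod 6), nbr A i)"
  note eq = wedges_at_eq[OF assms]
  have inj1: "inj_on ?f (wedge_dirs X A)" unfolding inj_on_def wedge_dirs_def using nbr_inj by blast
  have inj2: "inj_on ?g (wedge_dirs X A)" unfolding inj_on_def wedge_dirs_def using nbr_inj by blast
  have disj: "?f ` wedge_dirs X A \<inter> ?g ` wedge_dirs X A = {}"
  proof (rule ccontr)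
    assume "?f ` wedge_dirs X A \<inter> ?g ` wedge_dirs X A \<noteq> {}"
    then obtain i j where "i \<in> wedge_dirs X A" "j \<in> wedge_dirs X A" "?f i = ?g j" by blast
    hence "i < 6" "j < 6" "nbr A i = nbr A (Suc j mod 6)" "nbr A (Suc i mod 6) = nbr A j"
      unfolding wedge_dirs_def by blast+
    hence "i = Suc j mod 6" "Suc i mod 6 = j" using nbr_inj Suc_mod_6_less by blast+
    with \<open>i<6\<close> \<open>j<6\<close> show False by presburger
  qed
  have "card (wedges_at X A) = card (?f ` wedge_dirs X A) + card (?g ` wedge_dirs X A)"
    unfolding eq by (rule card_Un_disjoint) (simp_all add: disj finite_wedge_dirs)
  also have "\<dots> = 2 * nwedges X A" using inj1 inj2 by (simp add: card_image)
  finally show ?thesis .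
qed


lemma finite_edges: "finite X \<Longrightarrow> finite (edges X)"
  by (rule finite_subset[of _ "X \<times> X"]) (unfold edges_def, blast, simp)

lemma finite_triangles: "finite X \<Longrightarrow> finite (triangles X)"
  by (rule finite_subset[of _ "X \<times> X \<times> X"]) (unfold triangles_def, blast, simp)

lemma finite_wedges_at: "finite X \<Longrightarrow> finite (wedges_at X a)"
  by (rule finite_subset[of _ "X \<times> X"]) (unfold wedges_at_def, blast, simp)

lemma finite_nbrs: "finite X \<Longrightarrow> finite (nbrs X a)"
  by (rule finite_subset[of _ "X"]) (unfold nbrs_def, blast, simp)

lemma card_edges_sum: assumes "finite X" "tri_set X" shows "card (edges X) = (\<Sum>a\<in>X. occ X a)"
proof -
  have "edges X = Sigma X (nbrs X)" unfolding edges_def nbrs_def Sigma_def by blast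
  hence "card (edges X) = (\<Sum>a\<in>X. card (nbrs X a))" using assms(1) finite_nbrs by simp
  also have "\<dots> = (\<Sum>a\<in>X. occ X a)" using assms(2) card_nbrs unfolding tri_set_def by simp
  finally show ?thesis .
qed

lemma card_triangles_sum: assumes "finite X" "tri_set X" shows "card (triangles X) = (\<Sum>a\<in>X. 2 * nwedges X a)"
proof -
  have "triangles X = Sigma X (wedges_at X)" unfolding triangles_def wedges_at_def Sigma_def by blast
  hence "card (triangles X) = (\<Sum>a\<in>X. card (wedges_at X a))" using assms(1) finite_wedges_at by simp
  also have "\<dots> = (\<Sum>a\<in>X. 2 * nwedges X a)" using assms(2) card_wedges_at unfolding tri_set_def by simp
  finally show ?thesis .
qed

lemma euler6_sum: assumes "finite X" "tri_set X"
  shows "euler6 X = (\<Sum>a\<in>X. 6 - int (occ X a) - 2 * int (runs X a))"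
proof -
  have "euler6 X = 6 * int (card X) - 3 * (\<Sum>a\<in>X. int (occ X a)) + (\<Sum>a\<in>X. 2 * int (nwedges X a))"
    unfolding euler6_def card_edges_sum[OF assms] card_triangles_sum[OF assms] by simp
  also have "\<dots> = (\<Sum>a\<in>X. 6 - 3 * int (occ X a) + 2 * int (nwedges X a))"
    by (simp add: sum.distrib sum_subtractf sum_distrib_left)
  also have "\<dots> = (\<Sum>a\<in>X. 6 - int (occ X a) - 2 * int (runs X a))"
    by (rule sum.cong) (simp_all add: occ_eq_runs_plus_wedges)
  finally show ?thesis .
qed

lemma card_edges_remove: assumes "finite X" "x \<in> X" "tri_node x"
  shows "card (edges X) = card (edges (X - {x})) + 2 * occ (X - {x}) x"
proof -
  let ?X = "X - {x}" let ?N = "nbrs ?X x"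
  have eq: "edges X = edges ?X \<union> ({x} \<times> ?N \<union> (\<lambda>b. (b,x)) ` ?N)"
    using assms(2) adj_sym adj_irrefl unfolding edges_def nbrs_def by blast
  have d1: "edges ?X \<inter> ({x} \<times> ?N \<union> (\<lambda>b. (b,x)) ` ?N) = {}" unfolding edges_def by blast
  have d2: "({x} \<times> ?N) \<inter> ((\<lambda>b. (b,x)) ` ?N) = {}" unfolding nbrs_def by blast
  have f: "finite ?N" using finite_nbrs assms(1) by blast
  have "card (edges X) = card (edges ?X) + card ({x} \<times> ?N \<union> (\<lambda>b. (b,x)) ` ?N)"
    unfolding eq by (rule card_Un_disjoint) (use finite_edges assms(1) f d1 in auto)
  also have "card ({x} \<times> ?N \<union> (\<lambda>b. (b,x)) ` ?N) = card ({x} \<times> ?N) + card ((\<lambda>b. (b,x)) ` ?N)"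
    by (rule card_Un_disjoint) (use f d2 in auto)
  also have "card ((\<lambda>b. (b,x)) ` ?N) = card ?N" by (rule card_image) (auto simp: inj_on_def)
  also have "card ({x} \<times> ?N) = card ?N" by (rule card_cartesian_product_singleton)
  finally show ?thesis using card_nbrs[OF assms(3)] by simp
qed

lemma card_triangles_remove:
  assumes "finite X" "x \<in> X" "tri_node x"
  shows "card (triangles X) = card (triangles (X - {x})) + 6 * nwedges (X - {x}) x"
proof -
  let ?X = "X - {x}" let ?P = "wedges_at ?X x"
  define T1 where "T1 = (\<lambda>(b,c). (x,b,c)) ` ?P"
  define T2 where "T2 = (\<lambda>(b,c). (b,x,c)) ` ?P"
  define T3 where "T3 = (\<lambda>(b,c). (b,c,x)) ` ?P"
  have "triangles X = triangles ?X \<union> T1 \<union> T2 \<union> T3"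
    using assms(2) unfolding T1_def T2_def T3_def triangles_def wedges_at_def
    by (auto simp: image_iff adj_irrefl dest: adj_sym)
  moreover have "finite (triangles ?X)" "finite T1" "finite T2" "finite T3"
    using assms(1) finite_wedges_at finite_triangles unfolding T1_def T2_def T3_def by blast+
  moreover have "triangles ?X \<inter> T1 = {}" "triangles ?X \<inter> T2 = {}" "triangles ?X \<inter> T3 = {}"
    "T1 \<inter> T2 = {}" "T1 \<inter> T3 = {}" "T2 \<inter> T3 = {}"
    unfolding T1_def T2_def T3_def triangles_def wedges_at_def by auto
  moreover have "card T1 = card ?P" "card T2 = card ?P" "card T3 = card ?P"
    unfolding T1_def T2_def T3_def by (auto intro!: card_image inj_onI)
  ultimately show ?thesis
    using card_wedges_at[OF assms(3)] by (simp add: card_Un_disjoint Int_Un_distrib2)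
qed

lemma euler6_remove: assumes "finite X" "x \<in> X" "tri_node x"
  shows "euler6 X = euler6 (X - {x}) + 6 - 6 * int (runs (X - {x}) x)"
proof -
  have c: "card X = card (X - {x}) + 1" using assms(1,2)
    by (metis card_Suc_Diff1 Suc_eq_plus1)
  show ?thesis unfolding euler6_def card_edges_remove[OF assms] card_triangles_remove[OF assms] c
    using occ_eq_runs_plus_wedges[of "X - {x}" x] by simp
qed

lemma Suc_mod_6_add: "Suc ((i0 + k) mod 6) mod 6 = (i0 + Suc k) mod (6::nat)"
  by (simp add: mod_Suc_eq)

lemma sym_edges: "sym (edges X)"
  unfolding edges_def by (auto intro: symI adj_sym)

lemma edges_rtrancl_sym: "(a, b) \<in> (edges X)\<^sup>* \<Longrightarrow> (b, a) \<in> (edges X)\<^sup>*"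
  by (rule symD[OF sym_rtrancl[OF sym_edges]])

lemma edges_mono: "X \<subseteq> Y \<Longrightarrow> edges X \<subseteq> edges Y"
  unfolding edges_def by blast

lemma induced_connected_iff_edges: "induced_connected K \<longleftrightarrow> (\<forall>u\<in>K. \<forall>v\<in>K. (u, v) \<in> (edges K)\<^sup>*)"
  unfolding induced_connected_def edges_def by simp

text \<open>Walking counterclockwise around A from an occupied neighbour, one stays among the occupied
  neighbours of A, each adjacent to the previous one, until the end of the run is reached.\<close>
lemma occupied_nbr_reaches_run_end:
  assumes A: "tri_node A" and i: "i \<in> occ_dirs X A" and m: "occ X A \<le> 5"
  shows "\<exists>j\<in>run_ends X A. (nbr A i, nbr A j) \<in> (edges (nbrs X A))\<^sup>*"
proof -
  have i6: "i < 6" "nbr A i \<in> X" using i unfolding occ_dirs_def by blast+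
  have "occ_dirs X A \<noteq> {..<6}"
  proof
    assume "occ_dirs X A = {..<6}"
    thus False using m by simp
  qed
  then obtain l where l: "l < 6" "nbr A l \<notin> X" unfolding occ_dirs_def by blast
  let ?d = "\<lambda>k. (i + k) mod 6"
  define k0 where "k0 = (LEAST k. nbr A (?d (Suc k)) \<notin> X)"
  have "?d (Suc (l + 5 - i)) = l" using i6(1) l(1) by simp
  hence "nbr A (?d (Suc (l + 5 - i))) \<notin> X" using l(2) by simp
  hence end_k0: "nbr A (?d (Suc k0)) \<notin> X" unfolding k0_def by (rule LeastI)
  have "adj A (nbr A (?d k))" for k by (intro iffD2[OF adj_iff_nbr[OF A]] exI[of _ "?d k"]) simp
  hence in_nbrs: "nbr A (?d k) \<in> nbrs X A \<longleftrightarrow> nbr A (?d k) \<in> X" for k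
    unfolding nbrs_def by simp
  have walk: "nbr A (?d k) \<in> X \<and> (nbr A i, nbr A (?d k)) \<in> (edges (nbrs X A))\<^sup>*" if "k \<le> k0" for k
    using that
  proof (induction k)
    case 0
    thus ?case using i6 by simp
  next
    case (Suc k)
    hence IH: "nbr A (?d k) \<in> X" "(nbr A i, nbr A (?d k)) \<in> (edges (nbrs X A))\<^sup>*" by simp_all
    have next_in: "nbr A (?d (Suc k)) \<in> X"
      using not_less_Least[of k "\<lambda>k. nbr A (?d (Suc k)) \<notin> X"] Suc.prems unfolding k0_def by simp
    have "adj (nbr A (?d k)) (nbr A (?d (Suc k)))"
      using adj_nbr_nbr[OF A, of "?d k" "Suc (?d k) mod 6"] by (simp add: Suc_mod_6_add)
    hence "(nbr A (?d k), nbr A (?d (Suc k))) \<in> edges (nbrs X A)"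
      using IH(1) next_in in_nbrs[of k] in_nbrs[of "Suc k"] unfolding edges_def by blast
    thus ?case using IH(2) next_in by simp
  qed
  have "?d k0 \<in> run_ends X A"
    using walk[of k0] end_k0 unfolding run_ends_def by (simp add: Suc_mod_6_add)
  thus ?thesis using walk[of k0] by blast
qed

lemma runs_pos:
  assumes "tri_node A" "1 \<le> occ X A" "occ X A \<le> 5"
  shows "1 \<le> runs X A"
proof -
  obtain i where "i \<in> occ_dirs X A" using assms(2) by (metis all_not_in_conv card.empty not_one_le_zero)
  then obtain j where "j \<in> run_ends X A" using occupied_nbr_reaches_run_end[OF assms(1) _ assms(3)] by blast
  thus ?thesis using finite_run_ends[of X A] by (simp add: Suc_le_eq card_gt_0_iff) blast
qed

lemma ex_erodible:
  assumes "finite X" "tri_set X" "euler6 X > 0" "\<forall>a\<in>X. 1 \<le> occ X a"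
  shows "\<exists>a\<in>X. runs X a = 1 \<and> occ X a \<le> 3"
proof (rule ccontr)
  assume H: "\<not> ?thesis"
  have "\<forall>a\<in>X. 6 - int (occ X a) - 2 * int (runs X a) \<le> 0"
  proof
    fix a assume a: "a \<in> X"
    have m1: "1 \<le> occ X a" using assms(4) a by blast
    have ta: "tri_node a" using assms(2) a unfolding tri_set_def by blast
    have rm: "runs X a \<le> occ X a" by (rule runs_le_occ)
    show "6 - int (occ X a) - 2 * int (runs X a) \<le> 0"
    proof (cases "runs X a = 0")
      case True
      hence "\<not> occ X a \<le> 5" using runs_pos[OF ta m1] by linarith
      thus ?thesis using True by simp
    next
      case False
      show ?thesis
      proof (cases "runs X a = 1")
        case True
        hence "\<not> occ X a \<le> 3" using H a by blast
        thus ?thesis using True by simp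
      next
        case False
        thus ?thesis using \<open>runs X a \<noteq> 0\<close> rm by linarith
      qed
    qed
  qed
  hence "(\<Sum>a\<in>X. 6 - int (occ X a) - 2 * int (runs X a)) \<le> 0" by (intro sum_nonpos) blast
  thus False using euler6_sum[OF assms(1,2)] assms(3) by simp
qed

lemma run_ends_full:
  assumes "occ X A = 6"
  shows "run_ends X A = {}"
proof (intro equals0I)
  have "occ_dirs X A \<subseteq> {..<6}" unfolding occ_dirs_def by blast
  hence full: "occ_dirs X A = {..<6}" using assms card_subset_eq[of "{..<6}" "occ_dirs X A"] by simp
  fix i assume "i \<in> run_ends X A"
  hence "nbr A (Suc i mod 6) \<notin> X" unfolding run_ends_def by blast
  moreover have "Suc i mod 6 \<in> occ_dirs X A" using full by simp
  ultimately show False unfolding occ_dirs_def by blast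
qed

lemma single_run_nbrs_connected:
  assumes A: "tri_node A" and r: "runs X A = 1"
  shows "induced_connected (nbrs X A)"
proof -
  obtain i0 where R: "run_ends X A = {i0}" using r card_1_singletonE by blast
  have "occ X A \<le> 5"
  proof (rule ccontr)
    assume "\<not> occ X A \<le> 5"
    hence "occ X A = 6" using occ_le_6[of X A] by simp
    thus False using run_ends_full R by simp
  qed
  have to_i0: "(u, nbr A i0) \<in> (edges (nbrs X A))\<^sup>*" if "u \<in> nbrs X A" for u
  proof -
    have "adj A u" using that unfolding nbrs_def by blast
    then obtain i where i: "i < 6" "u = nbr A i" using adj_iff_nbr[OF A] by blast
    hence "i \<in> occ_dirs X A" using that unfolding nbrs_def occ_dirs_def by blast
    then obtain j where "j \<in> run_ends X A" "(nbr A i, nbr A j) \<in> (edges (nbrs X A))\<^sup>*"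
      using occupied_nbr_reaches_run_end[OF A _ \<open>occ X A \<le> 5\<close>] by blast
    thus ?thesis using R i(2) by simp
  qed
  show ?thesis unfolding induced_connected_iff_edges
  proof (intro ballI)
    fix u v assume "u \<in> nbrs X A" "v \<in> nbrs X A"
    hence "(u, nbr A i0) \<in> (edges (nbrs X A))\<^sup>*" "(nbr A i0, v) \<in> (edges (nbrs X A))\<^sup>*"
      using to_i0 edges_rtrancl_sym by blast+
    thus "(u, v) \<in> (edges (nbrs X A))\<^sup>*" by (rule rtrancl_trans)
  qed
qed

section \<open>Connected components and holes\<close>

definition component :: "node set \<Rightarrow> node \<Rightarrow> node set" where
  "component X a = {b. (a,b) \<in> (edges X)\<^sup>*}"

definition ncomps :: "node set \<Rightarrow> nat" where
  "ncomps X = card (component X ` X)"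

lemma component_self: "a \<in> component X a" unfolding component_def by simp

lemma component_subset: assumes "a \<in> X" shows "component X a \<subseteq> X"
proof
  fix b assume "b \<in> component X a"
  hence "(a,b) \<in> (edges X)\<^sup>*" unfolding component_def by simp
  thus "b \<in> X"
  proof (induction rule: rtrancl_induct)
    case base thus ?case using assms .
  next
    case (step b c) thus ?case unfolding edges_def by blast
  qed
qed

lemma component_eq: "b \<in> component X a \<Longrightarrow> component X b = component X a"
proof -
  assume "b \<in> component X a"
  hence ab: "(a,b) \<in> (edges X)\<^sup>*" unfolding component_def by simp
  hence ba: "(b,a) \<in> (edges X)\<^sup>*" by (rule edges_rtrancl_sym)
  show ?thesis unfolding component_def using ab ba by (meson rtrancl_trans)
qed

lemma ncomps_connected: assumes "induced_connected X" "X \<noteq> {}" shows "ncomps X = 1"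
proof -
  have "\<And>a. a \<in> X \<Longrightarrow> component X a = X"
  proof
    fix a assume "a \<in> X"
    thus "component X a \<subseteq> X" by (rule component_subset)
    show "X \<subseteq> component X a" using assms(1) \<open>a \<in> X\<close> unfolding induced_connected_iff_edges component_def by blast
  qed
  hence "component X ` X = {X}" using assms(2) by blast
  thus ?thesis unfolding ncomps_def by simp
qed

lemma run_end_in_component:
  assumes "tri_node x" "i \<in> occ_dirs X x" "occ X x \<le> 5"
  shows "\<exists>j\<in>run_ends X x. nbr x j \<in> component X (nbr x i)"
proof -
  have "(edges (nbrs X x))\<^sup>* \<subseteq> (edges X)\<^sup>*" by (intro rtrancl_mono edges_mono) (auto simp: nbrs_def)
  thus ?thesis using occupied_nbr_reaches_run_end[OF assms] unfolding component_def by blast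
qed

lemma component_avoiding:
  assumes x: "tri_node x" and a: "a \<in> X - {x}"
    and no: "\<not> (\<exists>i\<in>occ_dirs (X - {x}) x. nbr x i \<in> component (X - {x}) a)"
  shows "component X a = component (X - {x}) a \<and> x \<notin> component X a"
proof -
  let ?X = "X - {x}"
  have "\<And>b. (a,b) \<in> (edges X)\<^sup>* \<Longrightarrow> (a,b) \<in> (edges ?X)\<^sup>* \<and> b \<noteq> x"
  proof -
    fix b assume "(a,b) \<in> (edges X)\<^sup>*"
    thus "(a,b) \<in> (edges ?X)\<^sup>* \<and> b \<noteq> x"
    proof (induction rule: rtrancl_induct)
      case base thus ?case using a by simp
    next
      case (step b c)
      have bc: "b \<in> X" "c \<in> X" "adj b c" using step(2) unfolding edges_def by blast+
      have cx: "c \<noteq> x"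
      proof
        assume "c = x"
        hence "adj x b" using bc adj_sym by blast
        then obtain i where "i < 6" "b = nbr x i" using adj_iff_nbr[OF x, of b] by blast
        moreover have "b \<in> ?X" using bc step(3) by blast
        ultimately have "i \<in> occ_dirs ?X x" "nbr x i \<in> component ?X a"
          using step(3) unfolding occ_dirs_def component_def by blast+
        thus False using no by blast
      qed
      hence "(b,c) \<in> edges ?X" using bc step(3) unfolding edges_def by blast
      thus ?case using step(3) cx by (meson rtrancl.rtrancl_into_rtrancl)
    qed
  qed
  moreover have "(edges ?X)\<^sup>* \<subseteq> (edges X)\<^sup>*" by (rule rtrancl_mono, rule edges_mono) blast
  ultimately show ?thesis unfolding component_def by blast
qed

text \<open>A component of X - {x} either meets the neighbourhood of x, and then contains the end of a
  run around x, or it is a component of X not containing x.\<close>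
lemma ncomps_remove:
  assumes fin: "finite X" and x: "tri_node x" and xX: "x \<in> X" and m: "occ X x \<le> 5"
  shows "ncomps (X - {x}) + 1 \<le> ncomps X + runs (X - {x}) x"
proof -
  let ?X = "X - {x}"
  have m': "occ ?X x \<le> 5" using m occ_dirs_Diff_self[OF x] by simp
  define touching where "touching = {Q \<in> component ?X ` ?X. \<exists>i\<in>occ_dirs ?X x. nbr x i \<in> Q}"
  have cover: "component ?X ` ?X \<subseteq> touching \<union> (component X ` X - {component X x})"
  proof
    fix Q assume "Q \<in> component ?X ` ?X"
    then obtain a where a: "a \<in> ?X" "Q = component ?X a" by blast
    show "Q \<in> touching \<union> (component X ` X - {component X x})"
    proof (cases "\<exists>i\<in>occ_dirs ?X x. nbr x i \<in> Q")
      case True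
      thus ?thesis using a unfolding touching_def by blast
    next
      case False
      hence "component X a = Q" "x \<notin> Q"
        using component_avoiding[OF x a(1)] a(2) by auto
      thus ?thesis using a(1) component_self[of x X] by blast
    qed
  qed
  moreover have "touching \<subseteq> (\<lambda>j. component ?X (nbr x j)) ` run_ends ?X x"
  proof
    fix Q assume "Q \<in> touching"
    then obtain a i where Q: "Q = component ?X a" "i \<in> occ_dirs ?X x" "nbr x i \<in> Q"
      unfolding touching_def by blast
    obtain j where j: "j \<in> run_ends ?X x" "nbr x j \<in> component ?X (nbr x i)"
      using run_end_in_component[OF x Q(2) m'] by blast
    have "component ?X (nbr x j) = Q"
      using component_eq[OF j(2)] component_eq[of "nbr x i" ?X a] Q(1,3) by simp
    thus "Q \<in> (\<lambda>j. component ?X (nbr x j)) ` run_ends ?X x" using j(1) by blast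
  qed
  hence "card touching \<le> runs ?X x"
    by (meson card_image_le card_mono finite_imageI finite_run_ends le_trans)
  moreover have "card (component X ` X - {component X x}) = ncomps X - 1" "1 \<le> ncomps X"
    using fin xX unfolding ncomps_def by (auto simp: Suc_le_eq card_gt_0_iff)
  moreover have "ncomps ?X \<le> card touching + card (component X ` X - {component X x})"
  proof -
    have "finite touching" using fin unfolding touching_def by simp
    hence "ncomps ?X \<le> card (touching \<union> (component X ` X - {component X x}))"
      unfolding ncomps_def using cover fin by (intro card_mono) simp_all
    thus ?thesis using card_Un_le le_trans by blast
  qed
  ultimately show ?thesis by linarith
qed

text \<open>Six times the number of holes, i.e. of the first Betti number of the clique complex.\<close>
definition holes6 :: "node set \<Rightarrow> int" where
  "holes6 X = 6 * int (ncomps X) - euler6 X"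

lemma holes6_remove:
  assumes "finite X" "tri_node x" "x \<in> X" "occ X x \<le> 5"
  shows "holes6 (X - {x}) \<le> holes6 X"
  using ncomps_remove[OF assms] euler6_remove[OF assms(1,3,2)] unfolding holes6_def by linarith

lemma euler6_singleton: "euler6 {p} = 6"
proof -
  have "edges {p} = {}" unfolding edges_def using adj_irrefl by blast
  moreover have "triangles {p} = {}" unfolding triangles_def using adj_irrefl by blast
  ultimately show ?thesis unfolding euler6_def by simp
qed

lemma induced_connected_singleton: "induced_connected {p}"
  unfolding induced_connected_def by simp

lemma induced_connected_insert:
  assumes "induced_connected X" "q \<in> X" "adj p q"
  shows "induced_connected (insert p X)"
proof -
  let ?Y = "insert p X"
  have sub: "(edges X)\<^sup>* \<subseteq> (edges ?Y)\<^sup>*" by (rule rtrancl_mono, rule edges_mono) blast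
  have pq: "(p,q) \<in> edges ?Y" "(q,p) \<in> edges ?Y" using assms adj_sym unfolding edges_def by blast+
  have "\<And>u. u \<in> X \<Longrightarrow> (u,p) \<in> (edges ?Y)\<^sup>* \<and> (p,u) \<in> (edges ?Y)\<^sup>*"
  proof -
    fix u assume "u \<in> X"
    hence "(u,q) \<in> (edges ?Y)\<^sup>*" "(q,u) \<in> (edges ?Y)\<^sup>*" using assms(1,2) sub unfolding induced_connected_iff_edges by blast+
    thus "(u,p) \<in> (edges ?Y)\<^sup>* \<and> (p,u) \<in> (edges ?Y)\<^sup>*" using pq by (meson converse_rtrancl_into_rtrancl rtrancl_into_rtrancl)
  qed
  thus ?thesis unfolding induced_connected_iff_edges using sub assms(1) unfolding induced_connected_iff_edges by blast
qed

lemma induced_connected_remove: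
  assumes c: "induced_connected X" and AX: "A \<in> X"
    and K: "\<And>u v. u \<in> nbrs X A \<Longrightarrow> v \<in> nbrs X A \<Longrightarrow> (u,v) \<in> (edges (X - {A}))\<^sup>*"
  shows "induced_connected (X - {A})"
  unfolding induced_connected_iff_edges
proof (intro ballI)
  fix u v assume u: "u \<in> X - {A}" and v: "v \<in> X - {A}"
  let ?X = "X - {A}"
  have "(u,v) \<in> (edges X)\<^sup>*" using c u v unfolding induced_connected_iff_edges by blast
  have main: "\<And>w. (u,w) \<in> (edges X)\<^sup>* \<Longrightarrow> (w \<noteq> A \<longrightarrow> (u,w) \<in> (edges ?X)\<^sup>*) \<and> (w = A \<longrightarrow> (\<exists>k\<in>nbrs X A. (u,k) \<in> (edges ?X)\<^sup>*))"
  proof -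
    fix w assume "(u,w) \<in> (edges X)\<^sup>*"
    thus "(w \<noteq> A \<longrightarrow> (u,w) \<in> (edges ?X)\<^sup>*) \<and> (w = A \<longrightarrow> (\<exists>k\<in>nbrs X A. (u,k) \<in> (edges ?X)\<^sup>*))"
    proof (induction rule: rtrancl_induct)
      case base thus ?case using u by simp
    next
      case (step w w')
      have ww: "w \<in> X" "w' \<in> X" "adj w w'" using step(2) unfolding edges_def by blast+
      show ?case
      proof (cases "w = A")
        case True
        then obtain k where k: "k \<in> nbrs X A" "(u,k) \<in> (edges ?X)\<^sup>*" using step(3) by blast
        have "w' \<noteq> A" using ww True adj_irrefl by blast
        moreover have "w' \<in> nbrs X A" using ww True unfolding nbrs_def by blast
        ultimately have "(u,w') \<in> (edges ?X)\<^sup>*" using K[OF k(1)] k(2) by (meson rtrancl_trans)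
        thus ?thesis using \<open>w' \<noteq> A\<close> by blast
      next
        case False
        hence uw: "(u,w) \<in> (edges ?X)\<^sup>*" using step(3) by blast
        show ?thesis
        proof (cases "w' = A")
          case True
          hence "w \<in> nbrs X A" using ww adj_sym unfolding nbrs_def by blast
          thus ?thesis using uw True by blast
        next
          case F2: False
          hence "(w,w') \<in> edges ?X" using ww False unfolding edges_def by blast
          thus ?thesis using uw F2 by (meson rtrancl.rtrancl_into_rtrancl)
        qed
      qed
    qed
  qed
  show "(u,v) \<in> (edges ?X)\<^sup>*" using main[OF \<open>(u,v) \<in> (edges X)\<^sup>*\<close>] v by blast
qed

lemma occ_pos:
  assumes "induced_connected X" "a \<in> X" "b \<in> X" "a \<noteq> b" "tri_node a"
  shows "1 \<le> occ X a"
proof -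
  have "(a,b) \<in> (edges X)\<^sup>*" using assms unfolding induced_connected_iff_edges by blast
  then obtain a' where "(a,a') \<in> edges X" using assms(4) by (metis converse_rtranclE)
  hence a': "a' \<in> X" "adj a a'" unfolding edges_def by blast+
  then obtain i where "i < 6" "a' = nbr a i" using adj_iff_nbr[OF assms(5), of a'] by blast
  hence "i \<in> occ_dirs X a" using a' unfolding occ_dirs_def by blast
  hence "occ_dirs X a \<noteq> {}" by blast
  thus ?thesis using finite_occ_dirs[of X a] by (simp add: Suc_le_eq card_gt_0_iff)
qed

section \<open>Rhombi have Euler characteristic one\<close>

lemma nbr_rhombus_coord: "nbr (x,y,-x-y) i = (x + fst (unit_dir i), y + fst (snd (unit_dir i)),
    -(x + fst (unit_dir i)) - (y + fst (snd (unit_dir i))))"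
  unfolding nbr_coord using unit_dir_sum[of i] by (simp add: algebra_simps)

definition rhombus :: "int \<Rightarrow> int \<Rightarrow> node set" where
  "rhombus lo hi = {(x, y, -x-y) | x y. lo \<le> x \<and> x \<le> hi \<and> lo \<le> y \<and> y \<le> hi}"

definition rhombus_rank :: "int \<Rightarrow> int \<Rightarrow> node \<Rightarrow> int" where
  "rhombus_rank lo hi p = (case p of (x, y, z) \<Rightarrow> x * (hi - lo + 1) + y)"

definition down_closed :: "int \<Rightarrow> int \<Rightarrow> node set \<Rightarrow> bool" where
  "down_closed lo hi X \<longleftrightarrow> X \<subseteq> rhombus lo hi \<and>
     (\<forall>q\<in>rhombus lo hi. \<forall>p\<in>X. rhombus_rank lo hi q \<le> rhombus_rank lo hi p \<longrightarrow> q \<in> X)"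

lemma finite_rhombus: "finite (rhombus lo hi)"
proof -
  have "rhombus lo hi = (\<lambda>(x, y). (x, y, -x-y)) ` ({lo..hi} \<times> {lo..hi})"
    unfolding rhombus_def by auto
  thus ?thesis by simp
qed

lemma tri_set_rhombus: "tri_set (rhombus lo hi)"
  unfolding tri_set_def rhombus_def using tri_node_iff by auto

lemma rhombus_rank_less_iff:
  fixes lo hi x y x' y' :: int
  assumes "lo \<le> y" "y \<le> hi" "lo \<le> y'" "y' \<le> hi"
  shows "x * (hi - lo + 1) + y < x' * (hi - lo + 1) + y' \<longleftrightarrow> x < x' \<or> (x = x' \<and> y < y')"
proof -
  have "x * (hi - lo + 1) + y < x' * (hi - lo + 1) + y' \<longleftrightarrow> (x - x') * (hi - lo + 1) < y' - y"
    by (simp add: algebra_simps)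
  also have "\<dots> \<longleftrightarrow> x - x' < 0 \<or> (x = x' \<and> y < y')"
  proof (cases "x - x'" "0 :: int" rule: linorder_cases)
    case less
    hence "(x - x') * (hi - lo + 1) \<le> - (hi - lo + 1)"
      using mult_right_mono[of "x - x'" "- 1" "hi - lo + 1"] assms by simp
    hence "(x - x') * (hi - lo + 1) < y' - y" using assms by linarith
    thus ?thesis using less by simp
  next
    case greater
    hence "hi - lo + 1 \<le> (x - x') * (hi - lo + 1)"
      using mult_right_mono[of 1 "x - x'" "hi - lo + 1"] assms by simp
    hence "\<not> (x - x') * (hi - lo + 1) < y' - y" using assms by linarith
    thus ?thesis using greater by simp
  qed simp
  finally show ?thesis by simp
qed

lemma inj_on_rhombus_rank: "inj_on (rhombus_rank lo hi) (rhombus lo hi)"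
proof
  fix p q assume "p \<in> rhombus lo hi" "q \<in> rhombus lo hi" "rhombus_rank lo hi p = rhombus_rank lo hi q"
  then obtain x y x' y' where "p = (x, y, -x-y)" "q = (x', y', -x'-y')"
    "lo \<le> y" "y \<le> hi" "lo \<le> y'" "y' \<le> hi" "x * (hi - lo + 1) + y = x' * (hi - lo + 1) + y'"
    unfolding rhombus_def rhombus_rank_def by auto
  thus "p = q" using rhombus_rank_less_iff[of lo y hi y' x x'] rhombus_rank_less_iff[of lo y' hi y x' x]
    by (metis less_irrefl linorder_neqE)
qed

lemma rhombus_rank_nbr:
  "rhombus_rank lo hi (nbr (x, y, -x-y) i)
     = rhombus_rank lo hi (x, y, -x-y) + fst (unit_dir i) * (hi - lo + 1) + fst (snd (unit_dir i))"
  unfolding nbr_rhombus_coord rhombus_rank_def by (simp add: algebra_simps)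

lemma down_closed_Diff_max:
  assumes dc: "down_closed lo hi X" and p: "p \<in> X" "\<forall>q\<in>X. rhombus_rank lo hi q \<le> rhombus_rank lo hi p"
  shows "down_closed lo hi (X - {p})"
  unfolding down_closed_def
proof (intro conjI ballI impI)
  show "X - {p} \<subseteq> rhombus lo hi" using dc unfolding down_closed_def by blast
  fix q r assume q: "q \<in> rhombus lo hi" and r: "r \<in> X - {p}"
    and le: "rhombus_rank lo hi q \<le> rhombus_rank lo hi r"
  have "rhombus_rank lo hi r \<noteq> rhombus_rank lo hi p"
    using r p(1) dc inj_on_rhombus_rank unfolding down_closed_def inj_on_def by blast
  hence "rhombus_rank lo hi q < rhombus_rank lo hi p" using le r p(2) by fastforce
  moreover have "q \<in> X" using dc q r le unfolding down_closed_def by blast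
  ultimately show "q \<in> X - {p}" by auto
qed

lemma down_closed_max_nbr_iff:
  assumes dc: "down_closed lo hi X" and p: "p \<in> X" "\<forall>q\<in>X. rhombus_rank lo hi q \<le> rhombus_rank lo hi p"
    and xy: "p = (x, y, -x-y)" and i: "i < 6"
  shows "nbr p i \<in> X - {p} \<longleftrightarrow> (i = 3 \<and> lo < x \<and> y < hi) \<or> (i = 4 \<and> lo < x) \<or> (i = 5 \<and> lo < y)"
proof -
  let ?k = "rhombus_rank lo hi"
  have box: "lo \<le> x" "x \<le> hi" "lo \<le> y" "y \<le> hi"
    using dc p(1) xy unfolding down_closed_def rhombus_def by auto
  have in_rhombus: "nbr (x, y, -x-y) i \<in> rhombus lo hi \<longleftrightarrow> lo \<le> x + fst (unit_dir i) \<and> x + fst (unit_dir i) \<le> hi \<and>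
      lo \<le> y + fst (snd (unit_dir i)) \<and> y + fst (snd (unit_dir i)) \<le> hi"
    unfolding nbr_rhombus_coord rhombus_def by auto
  have "nbr p i \<in> X - {p} \<longleftrightarrow> nbr p i \<in> rhombus lo hi \<and> ?k (nbr p i) < ?k p"
  proof
    assume "nbr p i \<in> X - {p}"
    moreover from this have "?k (nbr p i) \<noteq> ?k p"
      using p(1) dc inj_on_rhombus_rank unfolding down_closed_def inj_on_def by blast
    ultimately show "nbr p i \<in> rhombus lo hi \<and> ?k (nbr p i) < ?k p"
      using p(2) dc unfolding down_closed_def by fastforce
  next
    assume a: "nbr p i \<in> rhombus lo hi \<and> ?k (nbr p i) < ?k p"
    hence "nbr p i \<in> X" using dc p(1) unfolding down_closed_def by (blast intro: less_imp_le)
    thus "nbr p i \<in> X - {p}" using a by auto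
  qed
  also have "\<dots> \<longleftrightarrow> (i = 3 \<and> lo < x \<and> y < hi) \<or> (i = 4 \<and> lo < x) \<or> (i = 5 \<and> lo < y)"
    unfolding in_rhombus xy rhombus_rank_nbr
    by (insert box, rule less_6_cases[OF i]; simp add: unit_dir_simps unit_dir_Suc_0; auto)
  finally show ?thesis .
qed

lemma down_closed_max_runs:
  assumes dc: "down_closed lo hi X" and p: "p \<in> X" "\<forall>q\<in>X. rhombus_rank lo hi q \<le> rhombus_rank lo hi p"
    and ne: "X - {p} \<noteq> {}"
  shows "runs (X - {p}) p = 1"
proof -
  obtain x y where xy: "p = (x, y, -x-y)" "lo \<le> x" "lo \<le> y" "y \<le> hi"
    using dc p(1) unfolding down_closed_def rhombus_def by blast
  have corner: "lo < x \<or> lo < y"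
  proof (rule ccontr)
    assume "\<not> (lo < x \<or> lo < y)"
    hence "x = lo" "y = lo" using xy by auto
    obtain q where q: "q \<in> X - {p}" using ne by blast
    hence "q \<in> rhombus lo hi" using dc unfolding down_closed_def by blast
    then obtain a b where ab: "q = (a, b, -a-b)" "lo \<le> a" "lo \<le> b" "b \<le> hi"
      unfolding rhombus_def by blast
    have "rhombus_rank lo hi q \<noteq> rhombus_rank lo hi p"
      using q p(1) dc inj_on_rhombus_rank unfolding down_closed_def inj_on_def by blast
    hence "rhombus_rank lo hi q < rhombus_rank lo hi p" using p(2) q by fastforce
    hence "a < lo \<or> (a = lo \<and> b < lo)"
      using rhombus_rank_less_iff[of lo b hi lo a lo] ab xy \<open>x = lo\<close> \<open>y = lo\<close>
      unfolding rhombus_rank_def by simp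
    thus False using ab by auto
  qed
  have "i \<in> run_ends (X - {p}) p \<longleftrightarrow> i = (if lo < y then 5 else 4)" for i
  proof (cases "i < 6")
    case True
    have "Suc i mod 6 < 6" by simp
    note nbr_iff = down_closed_max_nbr_iff[OF assms(1-3) xy(1) True]
      down_closed_max_nbr_iff[OF assms(1-3) xy(1) this]
    show ?thesis
      unfolding run_ends_def mem_Collect_eq nbr_iff using True corner xy(4)
      by (cases rule: less_6_cases[OF True]) auto
  next
    case False
    thus ?thesis unfolding run_ends_def by auto
  qed
  hence "run_ends (X - {p}) p = {if lo < y then 5 else 4}" by blast
  thus ?thesis by simp
qed

lemma down_closed_euler6:
  assumes "down_closed lo hi X" "X \<noteq> {}"
  shows "euler6 X = 6 \<and> induced_connected X"
  using assms
proof (induction "card X" arbitrary: X rule: less_induct)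
  case less
  have fin: "finite X" using less.prems(1) finite_rhombus finite_subset unfolding down_closed_def by blast
  have "Max (rhombus_rank lo hi ` X) \<in> rhombus_rank lo hi ` X" using fin less.prems(2) by simp
  then obtain p where p: "p \<in> X" "rhombus_rank lo hi p = Max (rhombus_rank lo hi ` X)" by force
  hence pmax: "\<forall>q\<in>X. rhombus_rank lo hi q \<le> rhombus_rank lo hi p" using fin by simp
  have tp: "tri_node p" using p(1) less.prems(1) tri_set_rhombus unfolding down_closed_def tri_set_def by blast
  show ?case
  proof (cases "X - {p} = {}")
    case True
    hence "X = {p}" using p(1) by blast
    thus ?thesis using euler6_singleton induced_connected_singleton by simp
  next
    case False
    have "card (X - {p}) < card X" using fin p(1) by (rule card_Diff1_less)
    hence IH: "euler6 (X - {p}) = 6" "induced_connected (X - {p})"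
      using less.hyps down_closed_Diff_max[OF less.prems(1) p(1) pmax] False by blast+
    have runs: "runs (X - {p}) p = 1" using down_closed_max_runs[OF less.prems(1) p(1) pmax False] .
    then obtain j where "j \<in> run_ends (X - {p}) p" by (metis card_1_singletonE insertI1)
    hence j: "j < 6" "nbr p j \<in> X - {p}" unfolding run_ends_def by blast+
    have "adj p (nbr p j)" using adj_iff_nbr[OF tp] j(1) by blast
    hence "induced_connected (insert p (X - {p}))" using induced_connected_insert[OF IH(2) j(2)] by blast
    moreover have "euler6 X = 6" using euler6_remove[OF fin p(1) tp] IH(1) runs by simp
    ultimately show ?thesis using p(1) by (simp add: insert_absorb)
  qed
qed

lemma rhombus_euler6: assumes "lo \<le> hi" shows "euler6 (rhombus lo hi) = 6" "induced_connected (rhombus lo hi)"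
proof -
  have "down_closed lo hi (rhombus lo hi)" unfolding down_closed_def by blast
  moreover have "(lo,lo,-lo-lo) \<in> rhombus lo hi" using assms unfolding rhombus_def by blast
  ultimately show "euler6 (rhombus lo hi) = 6" "induced_connected (rhombus lo hi)" using down_closed_euler6 by blast+
qed

section \<open>Hole-free sets\<close>

definition outer_edges :: "node set \<Rightarrow> (node \<times> node) set" where
  "outer_edges S = {(a,b). tri_node a \<and> tri_node b \<and> a \<notin> S \<and> b \<notin> S \<and> adj a b}"

definition hole_free :: "node set \<Rightarrow> bool" where
  "hole_free S \<longleftrightarrow> (\<forall>u v. tri_node u \<and> tri_node v \<and> u \<notin> S \<and> v \<notin> S \<longrightarrow> (u,v) \<in> (outer_edges S)\<^sup>*)"

lemma rtrancl_leaves_set: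
  assumes "(u, w) \<in> R\<^sup>*" "u \<in> X" "w \<notin> X"
  shows "\<exists>a b. (a, b) \<in> R \<and> a \<in> X \<and> b \<notin> X"
  using assms by (induction rule: rtrancl_induct) blast+

lemma occ_le_5: assumes "tri_node a" "adj a b" "b \<notin> X" shows "occ X a \<le> 5"
proof -
  obtain i where i: "i < 6" "b = nbr a i" using adj_iff_nbr[OF assms(1), of b] assms(2) by blast
  have "occ_dirs X a \<subseteq> {..<6} - {i}" using i assms(3) unfolding occ_dirs_def by blast
  hence "occ X a \<le> card ({..<6} - {i})" by (intro card_mono) simp_all
  also have "\<dots> = 5" using i by simp
  finally show ?thesis .
qed

text \<open>Since S is hole-free, every X \<supset> S has a node outside S with a neighbour outside X; removing
  it does not create holes.\<close>
lemma holes6_mono: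
  assumes hf: "hole_free S" and w: "tri_node w"
    and "w \<notin> X" "S \<subseteq> X" "finite X" "tri_set X"
  shows "holes6 S \<le> holes6 X"
  using assms(3-)
proof (induction "card (X - S)" arbitrary: X rule: less_induct)
  case less
  note wX = less.prems(1) and SX = less.prems(2) and fin = less.prems(3) and tX = less.prems(4)
  show ?case
  proof (cases "X = S")
    case True thus ?thesis by simp
  next
    case False
    then obtain y where y: "y \<in> X" "y \<notin> S" using SX by blast
    have "tri_node y" using tX y(1) unfolding tri_set_def by blast
    hence "(y, w) \<in> (outer_edges S)\<^sup>*" using hf w wX SX y(2) unfolding hole_free_def by blast
    then obtain a b where ab: "(a, b) \<in> outer_edges S" "a \<in> X" "b \<notin> X"
      using rtrancl_leaves_set[OF _ y(1) wX] by blast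
    hence a: "tri_node a" "a \<notin> S" "adj a b" unfolding outer_edges_def by blast+
    have "holes6 (X - {a}) \<le> holes6 X"
      using holes6_remove[OF fin a(1) ab(2) occ_le_5[OF a(1,3) ab(3)]] .
    moreover have "card (X - {a} - S) < card (X - S)"
    proof -
      have "X - {a} - S = X - S - {a}" by blast
      thus ?thesis using fin ab(2) a(2) card_Diff1_less[of "X - S" a] by simp
    qed
    moreover have "w \<notin> X - {a}" "S \<subseteq> X - {a}" "finite (X - {a})" "tri_set (X - {a})"
      using wX SX fin tX a(2) unfolding tri_set_def by blast+
    hence "holes6 S \<le> holes6 (X - {a})" using less.hyps[OF calculation(2)] by blast
    ultimately show ?thesis by linarith
  qed
qed

lemma ex_rhombus_superset:
  assumes "finite S" "tri_set S"
  shows "\<exists>N\<ge>0. S \<subseteq> rhombus (-N) N"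
proof -
  define f :: "node \<Rightarrow> int" where "f p = (case p of (x, y, z) \<Rightarrow> max \<bar>x\<bar> \<bar>y\<bar>)" for p
  define N where "N = Max (insert 0 (f ` S))"
  have N: "N \<ge> 0" "\<And>p. p \<in> S \<Longrightarrow> f p \<le> N" using assms(1) by (simp_all add: N_def)
  have "S \<subseteq> rhombus (-N) N"
  proof
    fix p assume p: "p \<in> S"
    obtain x y z where xyz: "p = (x, y, z)" by (cases p)
    have "z = -x - y" using assms(2) p unfolding xyz tri_set_def by (auto simp: tri_node_iff)
    moreover have "max \<bar>x\<bar> \<bar>y\<bar> \<le> N" using N(2)[OF p] xyz by (simp add: f_def)
    ultimately show "p \<in> rhombus (-N) N" unfolding rhombus_def xyz by auto
  qed
  thus ?thesis using N(1) by blast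
qed

lemma euler6_ge_6:
  assumes fin: "finite S" and ne: "S \<noteq> {}" and t: "tri_set S" and c: "induced_connected S"
    and hf: "hole_free S"
  shows "euler6 S \<ge> 6"
proof -
  obtain N where N: "N \<ge> 0" "S \<subseteq> rhombus (-N) N" using ex_rhombus_superset[OF fin t] by blast
  let ?R = "rhombus (-N) N"
  have R: "euler6 ?R = 6" "induced_connected ?R" using rhombus_euler6[of "-N" N] N(1) by simp_all
  have "(N + 1, N + 1, - (N + 1) - (N + 1)) \<notin> ?R" unfolding rhombus_def by simp
  moreover have "tri_node (N + 1, N + 1, - (N + 1) - (N + 1))" by (simp add: tri_node_iff)
  ultimately have "holes6 S \<le> holes6 ?R"
    using holes6_mono[OF hf _ _ N(2) finite_rhombus tri_set_rhombus] by blast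
  moreover have "(0, 0, - 0 - 0) \<in> ?R" unfolding rhombus_def using N(1) by (intro CollectI exI[of _ 0]) simp
  hence "ncomps ?R = 1" using ncomps_connected[OF R(2)] by blast
  moreover have "ncomps S = 1" using ncomps_connected[OF c ne] .
  ultimately show ?thesis using R(1) unfolding holes6_def by simp
qed

section \<open>Hexagons and contractibility\<close>

definition plane :: "(real \<times> real \<times> real) set" where
  "plane = {v. fst v + fst (snd v) + snd (snd v) = 0}"

lemma dist_triple: "dist (a::real,b::real,c::real) (a',b',c') = sqrt ((a-a')^2 + (b-b')^2 + (c-c')^2)"
  by (simp add: dist_Pair_Pair dist_real_def)

lemma embed_coord: "Defs.embed (x,y,z) = (real_of_int x, real_of_int y, real_of_int z)"
  by (simp add: embed_def)

lemma embed_plane: "tri_node p \<Longrightarrow> Defs.embed p \<in> plane"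
proof -
  assume "tri_node p"
  moreover obtain x y z where p: "p = (x,y,z)" by (cases p)
  ultimately have "x + y + z = 0" by (simp add: tri_node_iff)
  hence "real_of_int x + real_of_int y + real_of_int z = 0" by (metis of_int_add of_int_0)
  thus ?thesis unfolding p embed_coord plane_def by simp
qed

lemma embed_inj: "Defs.embed p = Defs.embed q \<Longrightarrow> p = q"
  by (cases p; cases q) (simp add: embed_coord)

lemma hexagon_plane: "hexagon p \<subseteq> plane"
  unfolding hexagon_def plane_def by (auto split: prod.splits)

text \<open>Squared norm of the vector (a, b, -a-b) of the plane x + y + z = 0.\<close>
definition plane_norm2 :: "real \<Rightarrow> real \<Rightarrow> real" where
  "plane_norm2 a b = a^2 + b^2 + (a + b)^2"

lemma plane_norm2_commute: "plane_norm2 a b = plane_norm2 b a"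
  unfolding plane_norm2_def by (simp add: add.commute)

lemma plane_norm2_uminus: "plane_norm2 (- a) (- b) = plane_norm2 a b"
  unfolding plane_norm2_def by (simp add: power2_eq_square algebra_simps)

lemma plane_norm2_le_1_small:
  assumes "0 \<le> u" "0 \<le> w" "u + w \<le> 2/3"
  shows "plane_norm2 u w \<le> 1"
proof -
  have "u^2 + w^2 \<le> (u + w)^2" using assms by (simp add: power2_sum)
  moreover have "(u + w)^2 \<le> (2/3)^2" using assms by (intro power_mono) simp_all
  ultimately show ?thesis unfolding plane_norm2_def by (simp add: power2_eq_square)
qed

lemma plane_norm2_le_1_large:
  assumes "0 \<le> w" "w \<le> u" "2/3 \<le> u + w" "u + w \<le> 1"
  shows "plane_norm2 (u - 1) w \<le> 1"
proof -
  have "(u - 1)^2 \<le> (2/3)^2" "(u + w - 1)^2 \<le> (1/3)^2"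
    using assms by (simp_all add: power2_le_iff_abs_le abs_if)
  moreover have "w^2 \<le> (1/2)^2" using assms by (intro power_mono) simp_all
  ultimately show ?thesis unfolding plane_norm2_def by (simp add: power2_eq_square algebra_simps)
qed

lemma lower_triangle_near_corner:
  assumes "0 \<le> u" "0 \<le> w" "u + w \<le> 1"
  shows "plane_norm2 u w \<le> 1 \<or> plane_norm2 (u - 1) w \<le> 1 \<or> plane_norm2 u (w - 1) \<le> 1"
proof (cases "u + w \<le> 2/3")
  case True
  thus ?thesis using plane_norm2_le_1_small assms by blast
next
  case False
  thus ?thesis
    using plane_norm2_le_1_large[of w u] plane_norm2_le_1_large[of u w] assms
    by (cases "w \<le> u") (auto simp: plane_norm2_commute add.commute)
qed

lemma unit_rhombus_near_corner:
  assumes "0 \<le> u" "u \<le> 1" "0 \<le> w" "w \<le> 1"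
  shows "plane_norm2 u w \<le> 1 \<or> plane_norm2 (u - 1) w \<le> 1 \<or>
         plane_norm2 u (w - 1) \<le> 1 \<or> plane_norm2 (u - 1) (w - 1) \<le> 1"
proof (cases "u + w \<le> 1")
  case True
  thus ?thesis using lower_triangle_near_corner assms by blast
next
  case False
  hence "plane_norm2 (1 - u) (1 - w) \<le> 1 \<or> plane_norm2 (1 - u - 1) (1 - w) \<le> 1 \<or>
      plane_norm2 (1 - u) (1 - w - 1) \<le> 1"
    using lower_triangle_near_corner[of "1 - u" "1 - w"] assms by simp
  thus ?thesis
    using plane_norm2_uminus[of "u - 1" "w - 1"] plane_norm2_uminus[of u "w - 1"]
      plane_norm2_uminus[of "u - 1" w] by auto
qed

lemma ex_node_within_1:
  assumes "v \<in> plane"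
  shows "\<exists>q. tri_node q \<and> dist v (Defs.embed q) \<le> 1"
proof -
  obtain a b c where v: "v = (a, b, c)" by (cases v)
  have c: "c = - a - b" using assms unfolding v plane_def by simp
  define x where "x = \<lfloor>a\<rfloor>"
  define y where "y = \<lfloor>b\<rfloor>"
  have uw: "0 \<le> a - x" "a - x \<le> 1" "0 \<le> b - y" "b - y \<le> 1"
    unfolding x_def y_def by linarith+
  have dist: "dist v (Defs.embed (x + i, y + j, - (x + i) - (y + j))) = sqrt (plane_norm2 (a - x - i) (b - y - j))"
    for i j :: int
    unfolding v c embed_coord dist_triple plane_norm2_def by (simp add: power2_eq_square algebra_simps)
  have "\<exists>i j :: int. plane_norm2 (a - x - of_int i) (b - y - of_int j) \<le> 1"
    using unit_rhombus_near_corner[OF uw]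
  proof (elim disjE)
    assume "plane_norm2 (a - x) (b - y) \<le> 1"
    thus ?thesis by (intro exI[of _ 0]) simp
  next
    assume "plane_norm2 (a - x - 1) (b - y) \<le> 1"
    thus ?thesis by (intro exI[of _ 1] exI[of _ 0]) simp
  next
    assume "plane_norm2 (a - x) (b - y - 1) \<le> 1"
    thus ?thesis by (intro exI[of _ 0] exI[of _ 1]) simp
  next
    assume "plane_norm2 (a - x - 1) (b - y - 1) \<le> 1"
    thus ?thesis by (intro exI[of _ 1]) simp
  qed
  then obtain i j :: int where "plane_norm2 (a - x - i) (b - y - j) \<le> 1" by blast
  moreover have "tri_node (x + i, y + j, - (x + i) - (y + j))" by (simp add: tri_node_iff)
  ultimately show ?thesis using dist[of i j]
    by (intro exI[of _ "(x + i, y + j, - (x + i) - (y + j))"]) (simp add: real_sqrt_le_1_iff)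
qed

lemma dist_triple_bound:
  assumes "dist (a::real,b::real,c::real) (a',b',c') \<le> r"
  shows "\<bar>a - a'\<bar> \<le> r" "\<bar>b - b'\<bar> \<le> r" "\<bar>c - c'\<bar> \<le> r"
proof -
  have "dist a a' \<le> r" using dist_fst_le[of "(a,b,c)" "(a',b',c')"] assms by simp
  thus "\<bar>a - a'\<bar> \<le> r" by (simp add: dist_real_def)
  have "dist (b,c) (b',c') \<le> r" using dist_snd_le[of "(a,b,c)" "(a',b',c')"] assms by simp
  hence "dist b b' \<le> r" "dist c c' \<le> r"
    using dist_fst_le[of "(b,c)" "(b',c')"] dist_snd_le[of "(b,c)" "(b',c')"] by simp_all
  thus "\<bar>b - b'\<bar> \<le> r" "\<bar>c - c'\<bar> \<le> r" by (simp_all add: dist_real_def)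
qed

lemma int_near_real: "\<bar>a - real_of_int x\<bar> \<le> 1 \<Longrightarrow> x \<in> {\<lceil>a - 1\<rceil>..\<lfloor>a + 1\<rfloor>}"
  by (simp add: ceiling_le_iff le_floor_iff abs_le_iff) linarith

lemma finite_nodes_within_1: "finite {q. tri_node q \<and> dist v (Defs.embed q) \<le> 1}"
proof -
  obtain a b c where v: "v = (a,b,c)" by (cases v)
  let ?B = "{\<lceil>a - 1\<rceil>..\<lfloor>a + 1\<rfloor>} \<times> {\<lceil>b - 1\<rceil>..\<lfloor>b + 1\<rfloor>} \<times> {\<lceil>c - 1\<rceil>..\<lfloor>c + 1\<rfloor>}"
  have "{q. tri_node q \<and> dist v (Defs.embed q) \<le> 1} \<subseteq> ?B"
  proof
    fix q assume q: "q \<in> {q. tri_node q \<and> dist v (Defs.embed q) \<le> 1}"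
    obtain x y z where qq: "q = (x,y,z)" by (cases q)
    have "dist (a,b,c) (real_of_int x, real_of_int y, real_of_int z) \<le> 1"
      using q unfolding v qq by (simp add: embed_coord)
    from dist_triple_bound[OF this] show "q \<in> ?B" unfolding qq using int_near_real by simp
  qed
  moreover have "finite ?B" by simp
  ultimately show ?thesis by (rule finite_subset)
qed

lemma ex_hexagon_containing: assumes "v \<in> plane" shows "\<exists>p. tri_node p \<and> v \<in> hexagon p"
proof -
  let ?near = "{q. tri_node q \<and> dist v (Defs.embed q) \<le> 1}"
  obtain q0 where q0: "q0 \<in> ?near" using ex_node_within_1[OF assms] by blast
  have fin: "finite ?near" by (rule finite_nodes_within_1)
  let ?d = "\<lambda>q. dist v (Defs.embed q)"
  have "?d ` ?near \<noteq> {}" using q0 by blast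
  hence "Min (?d ` ?near) \<in> ?d ` ?near" using fin by (intro Min_in) auto
  then obtain p where p: "p \<in> ?near" "?d p = Min (?d ` ?near)" by auto
  have pmin: "\<And>q. tri_node q \<Longrightarrow> ?d p \<le> ?d q"
  proof -
    fix q assume tq: "tri_node q"
    show "?d p \<le> ?d q"
    proof (cases "q \<in> ?near")
      case True thus ?thesis using p fin by simp
    next
      case False
      hence "?d q > 1" using tq by simp
      moreover have "?d p \<le> 1" using p by simp
      ultimately show ?thesis by simp
    qed
  qed
  have "v \<in> hexagon p"
    unfolding hexagon_def using assms pmin unfolding plane_def by (auto split: prod.splits)
  thus ?thesis using p by blast
qed

lemma hexagon_dist_centre: assumes "v \<in> hexagon p" shows "dist v (Defs.embed p) \<le> 1"
proof -
  have "v \<in> plane" using assms hexagon_plane by blast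
  then obtain q where q: "tri_node q" "dist v (Defs.embed q) \<le> 1" using ex_node_within_1 by blast
  have "dist v (Defs.embed p) \<le> dist v (Defs.embed q)" using assms q(1) unfolding hexagon_def by blast
  thus ?thesis using q by simp
qed

lemma centre_in_hexagon: assumes "tri_node p" "Defs.embed p \<in> hexagon q" shows "q = p"
proof -
  have "dist (Defs.embed p) (Defs.embed q) \<le> dist (Defs.embed p) (Defs.embed p)" using assms unfolding hexagon_def by blast
  hence "Defs.embed q = Defs.embed p" by simp
  thus ?thesis by (rule embed_inj)
qed

lemma small_sq_norm:
  fixes a b c :: int
  assumes "a + b + c = 0" "a^2 + b^2 + c^2 < 6"
  shows "a^2 + b^2 + c^2 = 0 \<or> a^2 + b^2 + c^2 = 2"
proof -
  have c: "c = -a-b" using assms by simp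
  have q: "a^2 + a*b + b^2 < 3" using assms(2) unfolding c by (simp add: power2_eq_square algebra_simps)
  have "\<bar>a\<bar> \<le> 1"
  proof (rule ccontr)
    assume "\<not> \<bar>a\<bar> \<le> 1"
    hence "2 \<le> \<bar>a\<bar>" by simp
    hence "2^2 \<le> \<bar>a\<bar>^2" by (rule power_mono) simp
    hence "4 \<le> a^2" by simp
    moreover have "0 \<le> (2*b + a)^2" by simp
    ultimately show False using q by (simp add: power2_eq_square algebra_simps)
  qed
  moreover have "\<bar>b\<bar> \<le> 1"
  proof (rule ccontr)
    assume "\<not> \<bar>b\<bar> \<le> 1"
    hence "2 \<le> \<bar>b\<bar>" by simp
    hence "2^2 \<le> \<bar>b\<bar>^2" by (rule power_mono) simp
    hence "4 \<le> b^2" by simp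
    moreover have "0 \<le> (2*a + b)^2" by simp
    ultimately show False using q by (simp add: power2_eq_square algebra_simps)
  qed
  ultimately have "a \<in> {-1,0,1}" "b \<in> {-1,0,1}" by auto
  from this q show ?thesis unfolding c by (elim insertE emptyE; simp)
qed

lemma close_nodes_adj:
  assumes tp: "tri_node p" and tq: "tri_node q" and d: "dist (Defs.embed p) (Defs.embed q) < sqrt 6"
  shows "p = q \<or> adj p q"
proof -
  obtain x1 y1 z1 where p: "p = (x1,y1,z1)" by (cases p)
  obtain x2 y2 z2 where q: "q = (x2,y2,z2)" by (cases q)
  have s1: "x1+y1+z1 = 0" "x2+y2+z2 = 0" using tp tq p q tri_node_iff by simp_all
  let ?S = "(x1-x2)^2 + (y1-y2)^2 + (z1-z2)^2"
  have "dist (Defs.embed p) (Defs.embed q) = sqrt (real_of_int ?S)" unfolding p q embed_coord dist_triple by simp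
  hence "real_of_int ?S < 6" using d by simp
  hence "?S < 6" by linarith
  moreover have "(x1-x2) + (y1-y2) + (z1-z2) = 0" using s1 by simp
  ultimately have "?S = 0 \<or> ?S = 2" using small_sq_norm by blast
  thus ?thesis
  proof
    assume "?S = 0"
    hence "(x1-x2)^2 = 0" "(y1-y2)^2 = 0" "(z1-z2)^2 = 0"
      using zero_le_power2[of "x1-x2"] zero_le_power2[of "y1-y2"] zero_le_power2[of "z1-z2"] by linarith+
    hence "x1 = x2" "y1 = y2" "z1 = z2" by simp_all
    thus ?thesis using p q by simp
  next
    assume "?S = 2"
    thus ?thesis unfolding p q adj_def using tp tq p q by simp
  qed
qed

definition hex_union :: "node set \<Rightarrow> (real \<times> real \<times> real) set" where
  "hex_union S = (\<Union>p\<in>S. hexagon p)"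

definition to_complex :: "real \<times> real \<times> real \<Rightarrow> complex" where
  "to_complex v = complex_of_real (fst v) + \<i> * complex_of_real (fst (snd v))"

definition of_complex :: "complex \<Rightarrow> real \<times> real \<times> real" where
  "of_complex z = (Re z, Im z, - Re z - Im z)"

lemma continuous_on_to_complex: "continuous_on A to_complex"
  unfolding to_complex_def by (intro continuous_intros)

lemma continuous_on_of_complex: "continuous_on A of_complex"
  unfolding of_complex_def by (intro continuous_intros)

lemma of_to_complex: "v \<in> plane \<Longrightarrow> of_complex (to_complex v) = v"
  unfolding of_complex_def to_complex_def plane_def by (cases v) (auto simp: algebra_simps)

lemma to_of_complex: "to_complex (of_complex z) = z"
  unfolding of_complex_def to_complex_def by (simp add: complex_eq_iff)

lemma of_complex_in_plane: "of_complex z \<in> plane"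
  unfolding of_complex_def plane_def by simp

lemma closed_plane: "closed plane"
  unfolding plane_def by (rule closed_Collect_eq) (intro continuous_intros)+

lemma closed_hexagon: "closed (hexagon p)"
proof -
  have "hexagon p = plane \<inter> (\<Inter>q\<in>{q. tri_node q}. {v. dist v (Defs.embed p) \<le> dist v (Defs.embed q)})"
    unfolding hexagon_def plane_def by (auto split: prod.splits)
  moreover have "closed {v. dist v (Defs.embed p) \<le> dist v (Defs.embed q)}" for q
    by (intro closed_Collect_le continuous_intros)
  ultimately show ?thesis using closed_plane by (simp add: closed_INT closed_Int)
qed

lemma compact_hexagon: "compact (hexagon p)"
proof -
  have "hexagon p \<subseteq> cball (Defs.embed p) 1" using hexagon_dist_centre by (simp add: subset_iff dist_commute)
  hence "bounded (hexagon p)" by (rule bounded_subset[rotated]) simp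
  thus ?thesis using closed_hexagon by (simp add: compact_eq_bounded_closed)
qed

lemma compact_hex_union: "finite S \<Longrightarrow> compact (hex_union S)"
  unfolding hex_union_def by (intro compact_UN compact_hexagon)

lemma hex_union_plane: "hex_union S \<subseteq> plane" unfolding hex_union_def using hexagon_plane by blast

text \<open>Borsuk's separation theorem: a compact contractible subset of the plane does not
  separate it.\<close>
lemma path_connected_complement:
  assumes "finite S" "contractible (hex_union S)"
  shows "path_connected (- (to_complex ` hex_union S))"
proof -
  have hom: "hex_union S homeomorphic (to_complex ` hex_union S)"
  proof (rule homeomorphicI[where f = to_complex and g = of_complex])
    show "to_complex ` hex_union S = to_complex ` hex_union S" ..
    show "of_complex ` to_complex ` hex_union S = hex_union S" using of_to_complex hex_union_plane by (force simp: image_image)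
    show "continuous_on (hex_union S) to_complex" by (rule continuous_on_to_complex)
    show "continuous_on (to_complex ` hex_union S) of_complex" by (rule continuous_on_of_complex)
    show "\<And>x. x \<in> hex_union S \<Longrightarrow> of_complex (to_complex x) = x" using of_to_complex hex_union_plane by blast
    show "\<And>y. y \<in> to_complex ` hex_union S \<Longrightarrow> to_complex (of_complex y) = y" using to_of_complex by blast
  qed
  have c: "contractible (to_complex ` hex_union S)" using homeomorphic_contractible[OF assms(2) hom] .
  have k: "compact (to_complex ` hex_union S)" using compact_continuous_image[OF continuous_on_to_complex compact_hex_union[OF assms(1)]] .
  have "connected (- (to_complex ` hex_union S))"
    using Borsukian_separation_compact[OF k] contractible_imp_Borsukian[OF c] by simp
  moreover have "open (- (to_complex ` hex_union S))" using k by (simp add: compact_imp_closed open_Compl)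
  ultimately show ?thesis by (simp add: connected_open_path_connected)
qed

lemma node_outside_hex_union:
  assumes tq: "tri_node q" and qS: "q \<notin> S"
  shows "to_complex (Defs.embed q) \<notin> to_complex ` hex_union S"
proof
  assume "to_complex (Defs.embed q) \<in> to_complex ` hex_union S"
  then obtain w where w: "w \<in> hex_union S" "to_complex (Defs.embed q) = to_complex w" by blast
  have "w \<in> plane" using w(1) hex_union_plane by blast
  hence "Defs.embed q = w" using of_to_complex[OF embed_plane[OF tq]] of_to_complex w(2) by metis
  then obtain p where "p \<in> S" "Defs.embed q \<in> hexagon p" using w(1) unfolding hex_union_def by blast
  thus False using centre_in_hexagon[OF tq] qS by blast
qed

lemma sqrt_6_gt: "12/5 < sqrt (6::real)"
  by (rule real_less_rsqrt) (simp add: power2_eq_square)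

lemma hexagons_of_close_points:
  assumes "v \<in> hexagon p" "w \<in> hexagon q" "tri_node p" "tri_node q" "dist v w < 2/5"
  shows "p = q \<or> adj p q"
proof -
  have "dist (Defs.embed p) (Defs.embed q) \<le> dist v (Defs.embed p) + dist v w + dist w (Defs.embed q)"
    using dist_triangle[of "Defs.embed p" "Defs.embed q" v] dist_triangle[of v "Defs.embed q" w]
    by (simp add: dist_commute)
  also have "\<dots> < 12/5"
    using hexagon_dist_centre[OF assms(1)] hexagon_dist_centre[OF assms(2)] assms(5) by linarith
  finally show ?thesis using close_nodes_adj[OF assms(3,4)] sqrt_6_gt by linarith
qed

text \<open>Discretisation: sample the path so finely that consecutive samples are closer than 2/5;
  the nodes whose hexagons contain the samples then form a walk outside S.\<close>
lemma path_outside_imp_outer_connected: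
  fixes h :: "real \<Rightarrow> real \<times> real \<times> real"
  assumes h: "continuous_on {0..1} h" "\<And>t. t \<in> {0..1} \<Longrightarrow> h t \<in> plane - hex_union S"
    and ends: "h 0 = Defs.embed u" "h 1 = Defs.embed v" "tri_node u" "tri_node v"
  shows "(u, v) \<in> (outer_edges S)\<^sup>*"
proof -
  have "uniformly_continuous_on {0..1} h" by (rule compact_uniformly_continuous[OF h(1)]) simp
  then obtain d where d: "d > 0"
    "\<And>s t. s \<in> {0..1} \<Longrightarrow> t \<in> {0..1} \<Longrightarrow> dist t s < d \<Longrightarrow> dist (h t) (h s) < 2/5"
    unfolding uniformly_continuous_on_def by (metis zero_less_divide_iff zero_less_numeral)
  obtain K :: nat where K: "K \<noteq> 0" "inverse (real K) < d" using real_arch_inverse d(1) by blast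
  let ?s = "\<lambda>k::nat. real k / real K"
  have s01: "?s k \<in> {0..1}" if "k \<le> K" for k using K that by (simp add: divide_le_eq_1)
  define N where "N k = (SOME p. tri_node p \<and> h (?s k) \<in> hexagon p)" for k
  have N: "tri_node (N k)" "h (?s k) \<in> hexagon (N k)" if "k \<le> K" for k
    unfolding N_def by (rule someI2_ex; use ex_hexagon_containing h(2)[OF s01[OF that]] in blast)+
  have N_outside: "N k \<notin> S" if "k \<le> K" for k
    using N[OF that] h(2)[OF s01[OF that]] unfolding hex_union_def by blast
  have "N 0 = u" "N K = v"
    using N[of 0] N[of K] centre_in_hexagon ends K(1) by auto
  moreover have "(N k, N (Suc k)) \<in> (outer_edges S)\<^sup>*" if "k < K" for k
  proof -
    have "dist (?s (Suc k)) (?s k) = inverse (real K)"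
      using K by (simp add: dist_real_def divide_simps)
    hence "dist (h (?s k)) (h (?s (Suc k))) < 2/5" using d(2) s01 that K by (simp add: dist_commute)
    moreover have k: "k \<le> K" "Suc k \<le> K" using that by simp_all
    ultimately have "N k = N (Suc k) \<or> adj (N k) (N (Suc k))"
      using hexagons_of_close_points[OF N(2)[OF k(1)] N(2)[OF k(2)] N(1)[OF k(1)] N(1)[OF k(2)]] by simp
    thus ?thesis using N(1) N_outside k unfolding outer_edges_def by auto
  qed
  hence "(N 0, N k) \<in> (outer_edges S)\<^sup>*" if "k \<le> K" for k
    using that by (induction k) (auto intro: rtrancl_trans)
  ultimately show ?thesis by auto
qed

lemma contractible_imp_hole_free:
  assumes fin: "finite S" and con: "contractible (hex_union S)"
  shows "hole_free S"
  unfolding hole_free_def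
proof (intro allI impI)
  fix u v assume uv: "tri_node u \<and> tri_node v \<and> u \<notin> S \<and> v \<notin> S"
  let ?C = "- (to_complex ` hex_union S)"
  have "to_complex (Defs.embed u) \<in> ?C" "to_complex (Defs.embed v) \<in> ?C"
    using node_outside_hex_union uv by blast+
  then obtain g where g: "path g" "path_image g \<subseteq> ?C"
    "pathstart g = to_complex (Defs.embed u)" "pathfinish g = to_complex (Defs.embed v)"
    using path_connected_complement[OF fin con] unfolding path_connected_def by blast
  have "continuous_on {0..1} (of_complex \<circ> g)"
    using g(1) unfolding path_def by (intro continuous_on_compose continuous_on_of_complex)
  moreover have "(of_complex \<circ> g) t \<in> plane - hex_union S" if "t \<in> {0..1}" for t
  proof -
    have "g t \<notin> to_complex ` hex_union S" using g(2) that unfolding path_image_def by blast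
    hence "of_complex (g t) \<notin> hex_union S" using to_of_complex[of "g t"] by (metis image_eqI)
    thus ?thesis using of_complex_in_plane by simp
  qed
  moreover have "(of_complex \<circ> g) 0 = Defs.embed u" "(of_complex \<circ> g) 1 = Defs.embed v"
    using g(3,4) of_to_complex[OF embed_plane] uv unfolding pathstart_def pathfinish_def by auto
  ultimately show "(u, v) \<in> (outer_edges S)\<^sup>*"
    using path_outside_imp_outer_connected uv by blast
qed

section \<open>Invariant and potential of the erosion algorithm\<close>

definition candidates :: "node set \<Rightarrow> conf \<Rightarrow> node set" where
  "candidates S c = {A \<in> S. cand c A \<noteq> Some False}"

definition erosion_inv :: "node set \<Rightarrow> conf \<Rightarrow> bool" where
  "erosion_inv S c \<longleftrightarrow> candidates S c \<noteq> {} \<and> induced_connected (candidates S c) \<and>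
     euler6 (candidates S c) > 0 \<and> (\<forall>A\<in>S. ldr c A \<longrightarrow> candidates S c = {A})"

definition potential :: "node set \<Rightarrow> conf \<Rightarrow> nat" where
  "potential S c = card {A \<in> S. cand c A = None} + card (candidates S c) +
     (if \<exists>A\<in>S. ldr c A then 0 else 1)"

lemma candidates_subset: "candidates S c \<subseteq> S"
  unfolding candidates_def by blast

lemma finite_candidates: "finite S \<Longrightarrow> finite (candidates S c)"
  using candidates_subset finite_subset by blast

lemma erosion_invD:
  assumes "erosion_inv S c"
  shows "candidates S c \<noteq> {}" "induced_connected (candidates S c)" "euler6 (candidates S c) > 0"
    "\<And>A. A \<in> S \<Longrightarrow> ldr c A \<Longrightarrow> candidates S c = {A}"
  using assms unfolding erosion_inv_def by blast+

lemma nbrs_candidates: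
  assumes "\<forall>B\<in>nbrs S A. cand c B \<noteq> None"
  shows "nbrs (candidates S c) A = Kset S c A"
proof -
  have "cand c B = Some True" if "B \<in> nbrs S A" "cand c B \<noteq> Some False" for B
    using assms that by (cases "cand c B") auto
  thus ?thesis unfolding nbrs_def Kset_def candidates_def by auto
qed

lemma can_erode_card:
  assumes "can_erode S c A"
  shows "1 \<le> card (Kset S c A) \<and> card (Kset S c A) \<le> 5"
  using assms unfolding can_erode_def by (auto simp: card_insert_if)

lemma can_erode_Kset_connected:
  assumes "can_erode S c A" "Kset S c A \<subseteq> Y"
    "\<And>C. C \<in> S \<Longrightarrow> C \<noteq> A \<Longrightarrow> cand c C = Some True \<Longrightarrow> C \<in> Y"
    "u \<in> Kset S c A" "v \<in> Kset S c A"
  shows "(u, v) \<in> (edges Y)\<^sup>*"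
proof -
  let ?K = "Kset S c A"
  consider "card ?K = 1" | "induced_connected ?K"
    | "\<exists>B D. B \<noteq> D \<and> ?K = {B, D} \<and> (\<exists>C\<in>S. C \<noteq> A \<and> cand c C = Some True \<and> adj B C \<and> adj C D)"
    using assms(1) unfolding can_erode_def by blast
  thus ?thesis
  proof cases
    case 1
    thus ?thesis using assms(4,5) by (metis card_1_singletonE rtrancl.rtrancl_refl singletonD)
  next
    case 2
    hence "(u, v) \<in> (edges ?K)\<^sup>*" using assms(4,5) unfolding induced_connected_iff_edges by blast
    thus ?thesis using rtrancl_mono[OF edges_mono[OF assms(2)]] by blast
  next
    case 3
    then obtain B D C where BD: "?K = {B, D}" "C \<in> S" "C \<noteq> A" "cand c C = Some True"
      "adj B C" "adj C D" by blast
    hence "B \<in> Y" "D \<in> Y" "C \<in> Y" using assms(2,3) by blast+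
    hence "(B, C) \<in> edges Y" "(C, D) \<in> edges Y" using BD(5,6) unfolding edges_def by blast+
    hence "(B, D) \<in> (edges Y)\<^sup>*" by simp
    moreover from this have "(D, B) \<in> (edges Y)\<^sup>*" by (rule edges_rtrancl_sym)
    ultimately show ?thesis using assms(4,5) BD(1) by auto
  qed
qed

lemma erosion_inv_Erode:
  assumes fin: "finite S" and t: "tri_set S" and I: "erosion_inv S c" and A: "A \<in> S"
    and en: "enabled_act S c A Erode"
  shows "erosion_inv S (apply_act c A Erode)"
proof -
  let ?X = "candidates S c"
  have e: "cand c A = Some True" "\<forall>B\<in>nbrs S A. cand c B \<noteq> None" "can_erode S c A"
    using en by simp_all
  have AX: "A \<in> ?X" using e(1) A unfolding candidates_def by simp
  have tA: "tri_node A" using t A unfolding tri_set_def by blast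
  have K: "nbrs ?X A = Kset S c A" using nbrs_candidates[OF e(2)] .
  have Kcard: "1 \<le> card (Kset S c A)" "card (Kset S c A) \<le> 5" using can_erode_card[OF e(3)] by simp_all
  have KY: "Kset S c A \<subseteq> ?X - {A}" using K adj_irrefl unfolding nbrs_def by blast
  have "runs (?X - {A}) A \<ge> 1"
    using runs_pos[OF tA, of "?X - {A}"] card_nbrs[OF tA, of ?X] K occ_dirs_Diff_self[OF tA] Kcard by simp
  hence "euler6 (?X - {A}) > 0"
    using euler6_remove[OF finite_candidates[OF fin] AX tA] erosion_invD(3)[OF I] by simp
  moreover have ne: "?X - {A} \<noteq> {}" using KY Kcard by fastforce
  moreover have "induced_connected (?X - {A})"
  proof (rule induced_connected_remove[OF erosion_invD(2)[OF I] AX])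
    fix u v assume "u \<in> nbrs ?X A" "v \<in> nbrs ?X A"
    thus "(u, v) \<in> (edges (?X - {A}))\<^sup>*"
      using can_erode_Kset_connected[OF e(3) KY] K unfolding candidates_def by auto
  qed
  moreover have "\<not> ldr c B" if "B \<in> S" for B
  proof
    assume "ldr c B"
    hence "?X = {B}" using erosion_invD(4)[OF I that] by simp
    thus False using AX ne by auto
  qed
  moreover have "candidates S (apply_act c A Erode) = ?X - {A}" unfolding candidates_def by auto
  ultimately show ?thesis unfolding erosion_inv_def by simp
qed

lemma erosion_inv_DeclareLeader:
  assumes I: "erosion_inv S c" and A: "A \<in> S" and en: "enabled_act S c A DeclareLeader"
  shows "erosion_inv S (apply_act c A DeclareLeader)"
proof -
  let ?X = "candidates S c"
  have e: "cand c A = Some True" "\<forall>B\<in>nbrs S A. cand c B = Some False" using en by simp_all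
  have AX: "A \<in> ?X" using e(1) A unfolding candidates_def by simp
  have "?X = {A}"
  proof (rule ccontr)
    assume "?X \<noteq> {A}"
    then obtain B where "B \<in> ?X" "B \<noteq> A" using AX by blast
    hence "(A, B) \<in> (edges ?X)\<^sup>*" using erosion_invD(2)[OF I] AX unfolding induced_connected_iff_edges by blast
    then obtain B' where "(A, B') \<in> edges ?X" using \<open>B \<noteq> A\<close> by (metis converse_rtranclE)
    hence "B' \<in> nbrs S A" "cand c B' \<noteq> Some False" unfolding edges_def candidates_def nbrs_def by blast+
    thus False using e(2) by blast
  qed
  thus ?thesis using I unfolding erosion_inv_def candidates_def by auto
qed

lemma erosion_inv_step:
  assumes "finite S" "tri_set S" "erosion_inv S c" "A \<in> S" "enabled_act S c A a"
  shows "erosion_inv S (apply_act c A a)"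
proof (cases a)
  case Setup
  hence "candidates S (apply_act c A a) = candidates S c" using assms(5) unfolding candidates_def by auto
  thus ?thesis using assms(3) Setup unfolding erosion_inv_def by simp
qed (use assms erosion_inv_Erode erosion_inv_DeclareLeader in auto)

lemma potential_ge_1:
  assumes "finite S" "erosion_inv S c"
  shows "1 \<le> potential S c"
proof -
  have "card (candidates S c) \<noteq> 0" using erosion_invD(1)[OF assms(2)] finite_candidates[OF assms(1)] by simp
  thus ?thesis unfolding potential_def by linarith
qed

text \<open>Setup and Erode each remove a node from the first or second summand of the potential, and
  the first DeclareLeader removes the third one; only a repeated DeclareLeader is a null step.\<close>
lemma potential_step:
  assumes I: "erosion_inv S c" and A: "A \<in> S" and en: "enabled_act S c A a" and fin: "finite S"
  shows "apply_act c A a = c \<or> potential S (apply_act c A a) < potential S c"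
proof (cases a)
  case Setup
  hence "cand c A = None" using en by simp
  hence "card ({B \<in> S. cand c B = None} - {A}) < card {B \<in> S. cand c B = None}"
    using A fin by (intro card_Diff1_less) auto
  moreover have "{B \<in> S. cand (apply_act c A a) B = None} = {B \<in> S. cand c B = None} - {A}"
    "candidates S (apply_act c A a) = candidates S c"
    using Setup \<open>cand c A = None\<close> unfolding candidates_def by auto
  ultimately show ?thesis using Setup unfolding potential_def by simp
next
  case Erode
  hence "cand c A = Some True" using en by simp
  hence "card (candidates S c - {A}) < card (candidates S c)"
    using A fin by (intro card_Diff1_less finite_candidates) (auto simp: candidates_def)
  moreover have "candidates S (apply_act c A a) = candidates S c - {A}"
    "{B \<in> S. cand (apply_act c A a) B = None} = {B \<in> S. cand c B = None}"
    using Erode \<open>cand c A = Some True\<close> unfolding candidates_def by auto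
  ultimately show ?thesis using Erode unfolding potential_def by simp
next
  case DeclareLeader
  show ?thesis
  proof (cases "ldr c A")
    case True
    hence "apply_act c A a = c" using DeclareLeader by (simp add: fun_upd_idem)
    thus ?thesis by blast
  next
    case False
    have "A \<in> candidates S c" using en DeclareLeader A unfolding candidates_def by simp
    hence "\<not> (\<exists>B\<in>S. ldr c B)" using erosion_invD(4)[OF I] False by (metis singletonD)
    moreover have "ldr (apply_act c A a) A" using DeclareLeader by simp
    ultimately show ?thesis using DeclareLeader A unfolding potential_def candidates_def by auto
  qed
qed

lemma ex_erodible_candidate:
  assumes fin: "finite S" and t: "tri_set S" and I: "erosion_inv S c"
    and no_null: "\<forall>A\<in>S. cand c A \<noteq> None" and two: "2 \<le> card (candidates S c)"
  shows "\<exists>A\<in>S. enabled_act S c A Erode \<and> Kset S c A \<noteq> {}"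
proof -
  let ?X = "candidates S c"
  have tX: "tri_set ?X" using t candidates_subset unfolding tri_set_def by blast
  have "\<forall>a\<in>?X. 1 \<le> occ ?X a"
  proof
    fix a assume a: "a \<in> ?X"
    obtain b where "b \<in> ?X" "b \<noteq> a" using two a
      by (metis card_le_Suc0_iff_eq finite_candidates[OF fin] not_less_eq_eq numeral_2_eq_2)
    thus "1 \<le> occ ?X a" using occ_pos[OF erosion_invD(2)[OF I] a] tX a unfolding tri_set_def by blast
  qed
  then obtain A where A: "A \<in> ?X" "runs ?X A = 1" "occ ?X A \<le> 3" "1 \<le> occ ?X A"
    using ex_erodible[OF finite_candidates[OF fin] tX erosion_invD(3)[OF I]] by blast
  have AS: "A \<in> S" and tA: "tri_node A" using A(1) t candidates_subset unfolding tri_set_def by blast+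
  have cA: "cand c A = Some True" using A(1) no_null unfolding candidates_def by auto
  have nn: "\<forall>B\<in>nbrs S A. cand c B \<noteq> None" using no_null unfolding nbrs_def by blast
  have K: "nbrs ?X A = Kset S c A" using nbrs_candidates[OF nn] .
  have "card (Kset S c A) = occ ?X A" using card_nbrs[OF tA, of ?X] K by simp
  moreover have "induced_connected (Kset S c A)" using single_run_nbrs_connected[OF tA A(2)] K by simp
  ultimately have "can_erode S c A" using A(3,4) unfolding can_erode_def by (cases "occ ?X A = 1") auto
  moreover have "Kset S c A \<noteq> {}" using A(4) \<open>card (Kset S c A) = occ ?X A\<close> by force
  ultimately show ?thesis using AS cA nn by auto
qed

lemma apply_act_neq:
  assumes "enabled_act S c A a" "a = DeclareLeader \<longrightarrow> \<not> ldr c A"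
  shows "apply_act c A a \<noteq> c"
proof
  assume "apply_act c A a = c"
  hence "cand (apply_act c A a) A = cand c A" "ldr (apply_act c A a) A = ldr c A" by simp_all
  thus False using assms by (cases a) auto
qed

lemma progress:
  assumes fin: "finite S" and t: "tri_set S" and I: "erosion_inv S c" and P: "potential S c \<noteq> 1"
  shows "\<exists>A\<in>S. enabled S c A \<and> (\<forall>a. enabled_act S c A a \<longrightarrow> apply_act c A a \<noteq> c)"
proof -
  have "card (candidates S c) \<noteq> 0" using erosion_invD(1)[OF I] finite_candidates[OF fin] by simp
  then consider (null) A where "A \<in> S" "cand c A = None"
    | (many) "\<forall>A\<in>S. cand c A \<noteq> None" "2 \<le> card (candidates S c)"
    | (one) "\<forall>A\<in>S. cand c A \<noteq> None" "card (candidates S c) = 1"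
    by (cases "\<forall>A\<in>S. cand c A \<noteq> None"; cases "card (candidates S c) = 1") auto
  thus ?thesis
  proof cases
    case null
    moreover have "enabled_act S c A a \<Longrightarrow> apply_act c A a \<noteq> c" for a
      using null by (intro apply_act_neq) auto
    ultimately show ?thesis unfolding enabled_def by (metis enabled_act.simps(1))
  next
    case many
    then obtain A where A: "A \<in> S" "enabled_act S c A Erode" "Kset S c A \<noteq> {}"
      using ex_erodible_candidate[OF fin t I] by blast
    then obtain B where "B \<in> nbrs S A" "cand c B = Some True" unfolding Kset_def by blast
    hence "\<not> enabled_act S c A DeclareLeader" by force
    hence "enabled_act S c A a \<Longrightarrow> apply_act c A a \<noteq> c" for a by (intro apply_act_neq) auto
    thus ?thesis using A unfolding enabled_def by blast
  next
    case one
    then obtain A where XA: "candidates S c = {A}" by (auto simp: card_1_singleton_iff)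
    have AS: "A \<in> S" "cand c A \<noteq> Some False" using XA unfolding candidates_def by blast+
    hence A: "A \<in> S" "cand c A = Some True" using one(1) by (cases "cand c A"; auto)+
    have "cand c B = Some False" if "B \<in> nbrs S A" for B
    proof -
      have "B \<in> S" "B \<noteq> A" using that adj_irrefl unfolding nbrs_def by blast+
      thus ?thesis using XA unfolding candidates_def by blast
    qed
    hence en: "enabled_act S c A DeclareLeader" and "Kset S c A = {}"
      using A(2) unfolding Kset_def by auto
    hence "\<not> can_erode S c A" unfolding can_erode_def by simp
    moreover have no_null: "{B \<in> S. cand c B = None} = {}" using one(1) by auto
    have "\<not> (\<exists>B\<in>S. ldr c B)"
    proof
      assume "\<exists>B\<in>S. ldr c B"
      hence "potential S c = 1" unfolding potential_def by (simp only: no_null XA) simp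
      thus False using P by simp
    qed
    ultimately have "enabled_act S c A a \<Longrightarrow> apply_act c A a \<noteq> c" for a
      using A \<open>\<not> (\<exists>B\<in>S. ldr c B)\<close> by (intro apply_act_neq) auto
    thus ?thesis using A en unfolding enabled_def by blast
  qed
qed

lemma potential_decreasing_action:
  assumes "finite S" "tri_set S" "erosion_inv S c" "potential S c \<noteq> 1"
  shows "\<exists>A\<in>S. enabled S c A \<and> (\<forall>a. enabled_act S c A a \<longrightarrow> potential S (apply_act c A a) < potential S c)"
proof -
  obtain A where "A \<in> S" "enabled S c A" "\<forall>a. enabled_act S c A a \<longrightarrow> apply_act c A a \<noteq> c"
    using progress[OF assms] by blast
  thus ?thesis using potential_step[OF assms(3) _ _ assms(1)] by blast
qed

locale erosion_execution =
  fixes S :: "node set" and c :: "nat \<Rightarrow> conf" and acts :: "nat \<Rightarrow> (node \<times> action) option"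
  assumes finite_S: "finite S" and S_nonempty: "S \<noteq> {}" and tri_set_S: "tri_set S"
    and connected_S: "induced_connected S" and contractible_S: "lattice_contractible S"
    and execution: "execution S c acts"
begin

lemma euler6_S_pos: "euler6 S > 0"
proof -
  have "hole_free S"
    using contractible_imp_hole_free[OF finite_S] contractible_S
    unfolding lattice_contractible_def hex_union_def by blast
  thus ?thesis using euler6_ge_6[OF finite_S S_nonempty tri_set_S connected_S] by simp
qed

lemma initial: "A \<in> S \<Longrightarrow> cand (c 0) A = None \<and> \<not> ldr (c 0) A"
  using execution unfolding execution_def by blast

lemma execution_step:
  "case acts n of
     Some (A, a) \<Rightarrow> A \<in> S \<and> enabled_act S (c n) A a \<and> c (Suc n) = apply_act (c n) A a
   | None \<Rightarrow> (\<forall>A\<in>S. \<not> enabled S (c n) A) \<and> c (Suc n) = c n"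
  using execution unfolding execution_def by blast

lemma step_Some:
  "acts n = Some (A, a) \<Longrightarrow> A \<in> S \<and> enabled_act S (c n) A a \<and> c (Suc n) = apply_act (c n) A a"
  using execution_step[of n] by simp

lemma step_cases:
  obtains (act) A a where "A \<in> S" "enabled_act S (c n) A a" "c (Suc n) = apply_act (c n) A a"
  | (idle) "c (Suc n) = c n"
proof (cases "acts n")
  case None
  thus ?thesis using execution_step[of n] idle by simp
next
  case (Some p)
  then obtain A a where "acts n = Some (A, a)" by (cases p) blast
  thus ?thesis using step_Some act by blast
qed

lemma invariant: "erosion_inv S (c n)"
proof (induction n)
  case 0
  have "candidates S (c 0) = S" using initial unfolding candidates_def by auto
  thus ?case unfolding erosion_inv_def using S_nonempty connected_S euler6_S_pos initial by simp
next
  case (Suc n)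
  thus ?case using erosion_inv_step[OF finite_S tri_set_S Suc.IH] by (cases rule: step_cases[of n]) simp_all
qed

lemma potential_step_exec: "c (Suc n) = c n \<or> potential S (c (Suc n)) < potential S (c n)"
  using potential_step[OF invariant _ _ finite_S] by (cases rule: step_cases[of n]) simp_all

lemma potential_antimono:
  assumes "n \<le> m"
  shows "potential S (c m) \<le> potential S (c n)"
proof (rule lift_Suc_antimono_le[OF _ assms])
  show "potential S (c (Suc k)) \<le> potential S (c k)" for k using potential_step_exec[of k] by auto
qed

lemma potential_eq_imp_eq: "n \<le> m \<Longrightarrow> potential S (c m) = potential S (c n) \<Longrightarrow> c m = c n"
proof (induction m)
  case (Suc m)
  show ?case
  proof (cases "n = Suc m")
    case False
    hence "n \<le> m" using Suc.prems(1) by simp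
    hence "potential S (c (Suc m)) \<le> potential S (c m)" "potential S (c m) \<le> potential S (c n)"
      using potential_step_exec[of m] potential_antimono by fastforce+
    hence "c (Suc m) = c m" "potential S (c m) = potential S (c n)"
      using potential_step_exec[of m] Suc.prems(2) by auto
    thus ?thesis using Suc.IH \<open>n \<le> m\<close> by simp
  qed simp
qed simp

lemma leader_step: "ldr (c n) A \<Longrightarrow> ldr (c (Suc n)) A"
proof (cases rule: step_cases[of n])
  case (act B a)
  thus "ldr (c n) A \<Longrightarrow> ldr (c (Suc n)) A" by (cases a) auto
qed simp

lemma leader_mono:
  assumes "n \<le> m" "ldr (c n) A"
  shows "ldr (c m) A"
  using assms(1) by (induction m rule: dec_induct) (use assms(2) leader_step in auto)

lemma leader_unique: "A \<in> S \<Longrightarrow> B \<in> S \<Longrightarrow> ldr (c n) A \<Longrightarrow> ldr (c n) B \<Longrightarrow> A = B"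
  using erosion_invD(4)[OF invariant] by blast

text \<open>Within a round, the amoebot that the progress lemma finds enabled at the start either acts
  or is disabled; either way the configuration changes and the potential drops.\<close>
lemma potential_round_decreases:
  assumes rd: "round_done S c acts t t'" and P: "potential S (c t) \<noteq> 1"
  shows "potential S (c t') < potential S (c t)"
proof -
  obtain A where A: "A \<in> S" "enabled S (c t) A"
      "\<forall>a. enabled_act S (c t) A a \<longrightarrow> potential S (apply_act (c t) A a) < potential S (c t)"
    using potential_decreasing_action[OF finite_S tri_set_S invariant P] by blast
  obtain s where s: "t < s" "s \<le> t'" "(\<exists>a. acts (s - 1) = Some (A, a)) \<or> \<not> enabled S (c s) A"
    using rd A(2) unfolding round_done_def by blast
  have "potential S (c s) < potential S (c t)"
  proof (rule ccontr)
    assume "\<not> potential S (c s) < potential S (c t)"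
    hence "potential S (c s) = potential S (c t)" "potential S (c (s - 1)) = potential S (c t)"
      using potential_antimono[of t s] potential_antimono[of "s - 1" s] potential_antimono[of t "s - 1"] s(1)
      by simp_all
    hence same: "c s = c t" "c (s - 1) = c t" using potential_eq_imp_eq s(1) by simp_all
    from s(3) show False
    proof
      assume "\<exists>a. acts (s - 1) = Some (A, a)"
      then obtain a where "acts (s - 1) = Some (A, a)" by blast
      hence "enabled_act S (c (s - 1)) A a" "c (Suc (s - 1)) = apply_act (c (s - 1)) A a"
        using step_Some by blast+
      moreover have "Suc (s - 1) = s" using s(1) by simp
      ultimately show False using A(3) same by auto
    next
      assume "\<not> enabled S (c s) A"
      thus False using A(2) same(1) by simp
    qed
  qed
  moreover have "potential S (c t') \<le> potential S (c s)" using potential_antimono s(2) by simp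
  ultimately show ?thesis by simp
qed

lemma potential_initial: "potential S (c 0) = 2 * card S + 1"
proof -
  have "candidates S (c 0) = S" "{A \<in> S. cand (c 0) A = None} = S"
    using initial unfolding candidates_def by auto
  thus ?thesis unfolding potential_def using initial by simp
qed

lemma potential_round_bound:
  "round_start S c acts i t \<Longrightarrow> potential S (c t) + i \<le> 2 * card S + 1 \<or> potential S (c t) = 1"
proof (induction rule: round_start.induct)
  case 1
  thus ?case using potential_initial by simp
next
  case (2 i t)
  let ?t' = "LEAST t'. round_done S c acts t t'"
  have rd: "round_done S c acts t ?t'" using 2(2) by (rule LeastI_ex)
  show ?case
  proof (cases "potential S (c t) = 1")
    case True
    moreover have "t \<le> ?t'" using rd unfolding round_done_def by simp
    ultimately have "potential S (c ?t') \<le> 1" using potential_antimono by fastforce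
    hence "potential S (c ?t') = 1" using potential_ge_1[OF finite_S invariant[of ?t']] by simp
    thus ?thesis by simp
  next
    case False
    thus ?thesis using potential_round_decreases[OF rd] 2(3) by auto
  qed
qed

lemma eventually_one_leader:
  assumes "round_start S c acts i t" and "2 * card S \<le> i"
  shows "card {A \<in> S. ldr (c t) A} = 1"
proof -
  have "potential S (c t) = 1"
    using potential_round_bound[OF assms(1)] potential_ge_1[OF finite_S invariant[of t]] assms(2)
    by linarith
  hence "\<exists>A\<in>S. ldr (c t) A"
    using erosion_invD(1)[OF invariant] finite_candidates[OF finite_S]
    unfolding potential_def by (auto split: if_splits)
  then obtain B where "B \<in> S" "ldr (c t) B" by blast
  hence "{A \<in> S. ldr (c t) A} = {B}" using leader_unique by blast
  thus ?thesis by simp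
qed

end

theorem corollary4:
  "\<exists>C::nat. \<forall>S c acts.
     finite S \<and> S \<noteq> {} \<and> (\<forall>p\<in>S. tri_node p) \<and> induced_connected S \<and>
     lattice_contractible S \<and> execution S c acts \<longrightarrow>
       (\<forall>t. \<forall>A\<in>S. \<forall>B\<in>S. ldr (c t) A \<and> ldr (c t) B \<longrightarrow> A = B) \<and>
       (\<forall>t t' A. A \<in> S \<and> t \<le> t' \<and> ldr (c t) A \<longrightarrow> ldr (c t') A) \<and>
       (\<forall>i t. round_start S c acts i t \<and> C * card S \<le> i \<longrightarrow>
              card {A \<in> S. ldr (c t) A} = 1)"
proof (intro exI[of _ 2] allI impI)
  fix S c acts
  assume "finite S \<and> S \<noteq> {} \<and> (\<forall>p\<in>S. tri_node p) \<and> induced_connected S \<and>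
     lattice_contractible S \<and> execution S c acts"
  then interpret erosion_execution S c acts
    by unfold_locales (simp_all add: tri_set_def)
  show "(\<forall>t. \<forall>A\<in>S. \<forall>B\<in>S. ldr (c t) A \<and> ldr (c t) B \<longrightarrow> A = B) \<and>
       (\<forall>t t' A. A \<in> S \<and> t \<le> t' \<and> ldr (c t) A \<longrightarrow> ldr (c t') A) \<and>
       (\<forall>i t. round_start S c acts i t \<and> 2 * card S \<le> i \<longrightarrow> card {A \<in> S. ldr (c t) A} = 1)"
    by (intro conjI allI ballI impI) (blast intro: leader_unique leader_mono eventually_one_leader)+
qed

end
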